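(* Let $r=d$ and $\sigma_t(x)=I$ for all $t,x$, and assume condition $(\mathcal T)_2$ holds for some $\lambda_A>0$. Let $\overline Y_{s,t}(x)\in\mathbb R^d$ be a stochastic process adapted to the filtration of $W$, and let $\overline X_{s,t}(x)$ solve $d\overline X_{s,t}(x)=\overline Y_{s,t}(x)dt+dW_t$, $\overline X_{s,s}(x)=x$. Then for any $1\le n\le\infty$, all $s\le t$ and $x\in\mathbb R^d$, $$\mathbb E\big[\|X_{s,t}(x)-\overline X_{s,t}(x)\|^n\big]^{1/n}\le\int_s^te^{-\lambda_A(t-u)}\,\mathbb E\big[\|b_u(\overline X_{s,u}(x))-\overline Y_{s,u}(x)\|^n\big]^{1/n}du.$$
   Context: $W_t$ is a $d$-dimensional Brownian motion; $b_t:\mathbb R^d\to\mathbb R^d$ has continuous derivatives in $x$ up to order three, uniformly bounded in $(t,x)$, and is smooth in $t$. $X_{s,t}(x)$ solves $dX_{s,t}(x)=b_t(X_{s,t}(x))dt+dW_t$, $X_{s,s}(x)=x$. Condition $(\mathcal T)_2$ (here with constant diffusion): $\nabla b_t(x)+\nabla b_t(x)'\le-2\lambda_AI$ for all $t,x$, where $(\nabla b)_{i,k}=\partial_{x_i}b^k$. $\|\cdot\|$ is the Euclidean norm; for $n=\infty$, $\mathbb E[\|Z\|^n]^{1/n}$ is read as the essential supremum of $\|Z\|$. *)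

theory Defs
  imports "HOL-Probability.Probability"
begin

definition Lp_norm :: "'a measure \<Rightarrow> ennreal \<Rightarrow> ('a \<Rightarrow> 'b::real_normed_vector) \<Rightarrow> ennreal" where
  "Lp_norm M p Z =
     (if p = \<infinity> then esssup M (\<lambda>\<omega>. ennreal (norm (Z \<omega>)))
      else (let I = (\<integral>\<^sup>+ \<omega>. ennreal (norm (Z \<omega>) powr enn2real p) \<partial>M)
            in if I = \<infinity> then \<infinity> else ennreal (enn2real I powr (1 / enn2real p))))"

definition brownian_motion :: "'a measure \<Rightarrow> (real \<Rightarrow> 'a \<Rightarrow> 'd::euclidean_space) \<Rightarrow> bool" where
  "brownian_motion M W \<longleftrightarrow>
     prob_space M \<and>
     (\<forall>t. W t \<in> borel_measurable M) \<and>
     (AE \<omega> in M. W 0 \<omega> = 0) \<and>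
     (AE \<omega> in M. continuous_on {0..} (\<lambda>t. W t \<omega>)) \<and>
     (\<forall>s t. 0 \<le> s \<longrightarrow> s < t \<longrightarrow>
        distributed M lborel (\<lambda>\<omega>. W t \<omega> - W s \<omega>)
          (\<lambda>y. ennreal (\<Prod>i\<in>Basis. normal_density 0 (sqrt (t - s)) (y \<bullet> i)))) \<and>
     (\<forall>(ts :: nat \<Rightarrow> real) n. 0 \<le> ts 0 \<longrightarrow> (\<forall>i. ts i < ts (Suc i)) \<longrightarrow>
        prob_space.indep_vars M (\<lambda>_. borel) (\<lambda>i \<omega>. W (ts (Suc i)) \<omega> - W (ts i) \<omega>) {..<n})"

definition natural_filtration :: "'a measure \<Rightarrow> (real \<Rightarrow> 'a \<Rightarrow> 'd::euclidean_space) \<Rightarrow> real \<Rightarrow> 'a measure" where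
  "natural_filtration M W t =
     sigma (space M) (\<Union>u\<in>{0..t}. {W u -` A \<inter> space M | A. A \<in> sets borel})"

definition C3_bounded_derivs :: "(real \<Rightarrow> 'd::euclidean_space \<Rightarrow> 'd) \<Rightarrow> bool" where
  "C3_bounded_derivs b \<longleftrightarrow>
     (\<exists>(D1 :: real \<Rightarrow> 'd \<Rightarrow> 'd \<Rightarrow>\<^sub>L 'd) (D2 :: real \<Rightarrow> 'd \<Rightarrow> 'd \<Rightarrow>\<^sub>L ('d \<Rightarrow>\<^sub>L 'd))
        (D3 :: real \<Rightarrow> 'd \<Rightarrow> 'd \<Rightarrow>\<^sub>L ('d \<Rightarrow>\<^sub>L ('d \<Rightarrow>\<^sub>L 'd))) C.
        (\<forall>t x. (b t has_derivative blinfun_apply (D1 t x)) (at x)) \<and>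
        (\<forall>t x. (D1 t has_derivative blinfun_apply (D2 t x)) (at x)) \<and>
        (\<forall>t x. (D2 t has_derivative blinfun_apply (D3 t x)) (at x)) \<and>
        (\<forall>t. continuous_on UNIV (D3 t)) \<and>
        (\<forall>t x. norm (D1 t x) \<le> C \<and> norm (D2 t x) \<le> C \<and> norm (D3 t x) \<le> C))"

definition smooth_in_time :: "(real \<Rightarrow> 'd::euclidean_space \<Rightarrow> 'd) \<Rightarrow> bool" where
  "smooth_in_time b \<longleftrightarrow>
     (\<forall>x. \<exists>f :: nat \<Rightarrow> real \<Rightarrow> 'd. f 0 = (\<lambda>t. b t x) \<and>
        (\<forall>k t. (f k has_vector_derivative f (Suc k) t) (at t)))"

text \<open>Condition (T)_2 with sigma = I: grad b + (grad b)' \<le> -2 lambda I in the Loewner order,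
  i.e. v . (D b_t(x) v) \<le> - lambda |v|^2 for all v (where D b_t(x) is the Jacobian).\<close>
definition condition_T2 :: "(real \<Rightarrow> 'd::euclidean_space \<Rightarrow> 'd) \<Rightarrow> real \<Rightarrow> bool" where
  "condition_T2 b lam \<longleftrightarrow>
     (\<forall>t x. \<exists>D. (b t has_derivative D) (at x) \<and>
        (\<forall>v. 2 * (v \<bullet> D v) \<le> - 2 * lam * (v \<bullet> v)))"

end

theory Submission
  imports Defs
begin

(* Fix a path and put Z = X - Xb. The Brownian increments cancel, so
   Z u = int_s^u (G + h) with G v = b_v(X_v) - b_v(Xb_v) and h v = b_v(Xb_v) - Y_v.
   Condition (T)_2 makes every b_v dissipative, Z . G <= -lamA |Z|^2, and b_v is Lipschitz, so a
   Gronwall argument gives |Z_t| <= int_s^t exp(-lamA (t - u)) |h u| du path by path. As h is only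
   integrable, Z need not be differentiable: the Gronwall step is run on an Euler discretisation of
   [s, t], whose error vanishes with the mesh. Minkowski's integral inequality then moves the
   L^n norm inside the time integral; the joint measurability in (u, omega) that Fubini needs comes
   from the continuity of the paths of Xb. *)

section \<open>A Gronwall estimate for dissipative integral equations\<close>

lemma norm_add_scaleR_le_exp:
  fixes z g :: "'a::real_inner"
  assumes d: "0 \<le> d" and zg: "z \<bullet> g \<le> - lam * (norm z)\<^sup>2" and gL: "norm g \<le> L * norm z"
  shows "norm (z + d *\<^sub>R g) \<le> exp (- lam * d + L\<^sup>2 / 2 * d\<^sup>2) * norm z"
proof (rule power2_le_imp_le)
  have "(norm (z + d *\<^sub>R g))\<^sup>2 = (norm z)\<^sup>2 + 2 * d * (z \<bullet> g) + d\<^sup>2 * (norm g)\<^sup>2"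
    unfolding power2_norm_eq_inner
    by (simp add: inner_add_left inner_add_right inner_commute algebra_simps power2_eq_square)
  also have "\<dots> \<le> (norm z)\<^sup>2 + 2 * d * (- lam * (norm z)\<^sup>2) + d\<^sup>2 * (L * norm z)\<^sup>2"
    using d zg gL by (intro add_mono mult_left_mono power_mono order_refl) auto
  also have "\<dots> = (1 + 2 * (- lam * d + L\<^sup>2 / 2 * d\<^sup>2)) * (norm z)\<^sup>2"
    by (simp add: algebra_simps power2_eq_square)
  also have "\<dots> \<le> exp (2 * (- lam * d + L\<^sup>2 / 2 * d\<^sup>2)) * (norm z)\<^sup>2"
    by (intro mult_right_mono exp_ge_add_one_self) auto
  also have "\<dots> = (exp (- lam * d + L\<^sup>2 / 2 * d\<^sup>2) * norm z)\<^sup>2"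
    by (simp add: power_mult_distrib power2_eq_square mult_exp_exp)
  finally show "(norm (z + d *\<^sub>R g))\<^sup>2 \<le> (exp (- lam * d + L\<^sup>2 / 2 * d\<^sup>2) * norm z)\<^sup>2" .
qed simp

lemma discrete_gronwall:
  fixes a \<beta> :: "nat \<Rightarrow> real"
  assumes step: "\<And>k. k < N \<Longrightarrow> a (Suc k) \<le> E * a k + \<beta> k"
    and E: "1 \<le> E" and \<beta>: "\<And>k. k < N \<Longrightarrow> 0 \<le> \<beta> k"
  shows "a N \<le> E ^ N * (a 0 + (\<Sum>k<N. \<beta> k))"
proof -
  have "a k \<le> E ^ k * (a 0 + (\<Sum>j<k. \<beta> j))" if "k \<le> N" for k
    using that
  proof (induction k)
    case (Suc k)
    then have "E * a k \<le> E * (E ^ k * (a 0 + (\<Sum>j<k. \<beta> j)))"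
      using E by (intro mult_left_mono) auto
    then have "a (Suc k) \<le> E * (E ^ k * (a 0 + (\<Sum>j<k. \<beta> j))) + \<beta> k"
      using step[of k] Suc.prems by simp
    also have "\<beta> k \<le> E ^ Suc k * \<beta> k"
      using mult_right_mono[OF one_le_power[OF E, of "Suc k"], of "\<beta> k"] \<beta>[of k] Suc.prems by simp
    finally show ?case by (simp add: algebra_simps)
  qed simp
  then show ?thesis by simp
qed

lemma integrable_on_continuous_mult_norm:
  fixes h :: "real \<Rightarrow> 'a::euclidean_space"
  assumes h: "h absolutely_integrable_on {a..b}" and f: "continuous_on {a..b} f"
  shows "(\<lambda>v. f v * norm (h v)) integrable_on {a..b}"
proof -
  have "(\<lambda>v. f v * norm (h v)) absolutely_integrable_on {a..b}"
  proof (rule absolutely_integrable_bounded_measurable_product_real)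
    show "f \<in> borel_measurable (lebesgue_on {a..b})"
      using f by (intro continuous_imp_measurable_on_sets_lebesgue) auto
    show "bounded (f ` {a..b})"
      using f by (intro compact_imp_bounded compact_continuous_image) auto
    show "(\<lambda>v. norm (h v)) absolutely_integrable_on {a..b}"
      using absolutely_integrable_norm[OF h] by (simp add: o_def)
  qed simp
  then show ?thesis using set_lebesgue_integral_eq_integral(1) by blast
qed

lemma norm_integral_step_le:
  fixes G h :: "real \<Rightarrow> 'a::euclidean_space"
  assumes "a \<le> c" and G: "G integrable_on {a..c}" and h: "h absolutely_integrable_on {a..c}"
    and osc: "\<And>v. v \<in> {a..c} \<Longrightarrow> norm (G v - G a) \<le> \<eta>"
  shows "norm (z + integral {a..c} (\<lambda>v. G v + h v))
    \<le> norm (z + (c - a) *\<^sub>R G a) + (c - a) * \<eta> + integral {a..c} (\<lambda>v. norm (h v))"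
proof -
  have hi: "h integrable_on {a..c}" and hni: "(\<lambda>v. norm (h v)) integrable_on {a..c}"
    using h by (auto simp: absolutely_integrable_on_def)
  have split: "integral {a..c} (\<lambda>v. G v + h v)
      = (c - a) *\<^sub>R G a + integral {a..c} (\<lambda>v. G v - G a) + integral {a..c} h"
    using \<open>a \<le> c\<close> by (simp add: integral_add integral_diff G hi integrable_diff integrable_const_ivl)
  have "norm (integral {a..c} (\<lambda>v. G v - G a)) \<le> integral {a..c} (\<lambda>v. \<eta>)"
    using osc by (intro integral_norm_bound_integral integrable_diff G) auto
  then have osc_part: "norm (integral {a..c} (\<lambda>v. G v - G a)) \<le> (c - a) * \<eta>"
    using \<open>a \<le> c\<close> by simp
  have h_part: "norm (integral {a..c} h) \<le> integral {a..c} (\<lambda>v. norm (h v))"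
    by (rule integral_norm_bound_integral[OF hi hni]) simp
  show ?thesis
    unfolding split add.assoc[symmetric]
    using norm_triangle_ineq[of "z + (c - a) *\<^sub>R G a + integral {a..c} (\<lambda>v. G v - G a)" "integral {a..c} h"]
      norm_triangle_ineq[of "z + (c - a) *\<^sub>R G a" "integral {a..c} (\<lambda>v. G v - G a)"] osc_part h_part
    by linarith
qed

lemma dissipative_integral_equation_step:
  fixes Z G h :: "real \<Rightarrow> 'a::euclidean_space"
  assumes ac: "a \<le> c" and G: "G integrable_on {a..c}" and h: "h absolutely_integrable_on {a..c}"
    and Zc: "Z c = Z a + integral {a..c} (\<lambda>v. G v + h v)"
    and dissip: "Z a \<bullet> G a \<le> - lam * (norm (Z a))\<^sup>2" and lip: "norm (G a) \<le> L * norm (Z a)"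
    and osc: "\<And>v. v \<in> {a..c} \<Longrightarrow> norm (G v - G a) \<le> \<eta>"
  shows "exp (lam * c) * norm (Z c) \<le> exp (L\<^sup>2 / 2 * (c - a)\<^sup>2) * (exp (lam * a) * norm (Z a))
    + exp (lam * c) * ((c - a) * \<eta>) + exp (\<bar>lam\<bar> * (c - a)) * integral {a..c} (\<lambda>v. exp (lam * v) * norm (h v))"
proof -
  have hn: "(\<lambda>v. norm (h v)) integrable_on {a..c}"
    using h by (simp add: absolutely_integrable_on_def)
  have weighted: "(\<lambda>v. exp (lam * v) * norm (h v)) integrable_on {a..c}"
    using h by (rule integrable_on_continuous_mult_norm) (intro continuous_intros)
  have "norm (Z c) \<le> norm (Z a + (c - a) *\<^sub>R G a) + (c - a) * \<eta> + integral {a..c} (\<lambda>v. norm (h v))"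
    unfolding Zc by (rule norm_integral_step_le[OF ac G h osc])
  moreover have "norm (Z a + (c - a) *\<^sub>R G a) \<le> exp (- lam * (c - a) + L\<^sup>2 / 2 * (c - a)\<^sup>2) * norm (Z a)"
    using ac by (intro norm_add_scaleR_le_exp dissip lip) simp
  ultimately have "exp (lam * c) * norm (Z c) \<le> exp (lam * c) * (exp (- lam * (c - a) + L\<^sup>2 / 2 * (c - a)\<^sup>2) * norm (Z a)
      + (c - a) * \<eta> + integral {a..c} (\<lambda>v. norm (h v)))"
    by (intro mult_left_mono) auto
  also have "\<dots> = exp (L\<^sup>2 / 2 * (c - a)\<^sup>2) * (exp (lam * a) * norm (Z a))
      + exp (lam * c) * ((c - a) * \<eta>) + exp (lam * c) * integral {a..c} (\<lambda>v. norm (h v))"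
    by (simp add: distrib_left mult_exp_exp flip: mult.assoc) (simp add: algebra_simps)
  also have "exp (lam * c) * integral {a..c} (\<lambda>v. norm (h v))
      \<le> exp (\<bar>lam\<bar> * (c - a)) * integral {a..c} (\<lambda>v. exp (lam * v) * norm (h v))"
  proof -
    have "exp (lam * c) * norm (h v) \<le> exp (\<bar>lam\<bar> * (c - a)) * (exp (lam * v) * norm (h v))"
      if "v \<in> {a..c}" for v
    proof -
      have "lam * (c - v) \<le> \<bar>lam\<bar> * (c - a)"
        using that by (intro mult_mono) auto
      then have "exp (lam * c) \<le> exp (\<bar>lam\<bar> * (c - a)) * exp (lam * v)"
        by (simp add: mult_exp_exp right_diff_distrib)
      then show ?thesis
        by (simp add: mult_right_mono flip: mult.assoc)
    qed
    then have "integral {a..c} (\<lambda>v. exp (lam * c) * norm (h v))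
        \<le> integral {a..c} (\<lambda>v. exp (\<bar>lam\<bar> * (c - a)) * (exp (lam * v) * norm (h v)))"
      using hn weighted by (intro integral_le integrable_cmul) auto
    then show ?thesis by simp
  qed
  finally show ?thesis by simp
qed

lemma integral_sum_consecutive:
  fixes f :: "real \<Rightarrow> 'a::banach"
  assumes u: "\<And>k. u k \<le> u (Suc k)" and f: "f integrable_on {u 0..u N}"
  shows "(\<Sum>k<N. integral {u k..u (Suc k)} f) = integral {u 0..u N} f"
  using f
proof (induction N)
  case (Suc N)
  have "u 0 \<le> u N" "u N \<le> u (Suc N)"
    using u by (auto intro: lift_Suc_mono_le)
  moreover from this have "f integrable_on {u 0..u N}"
    by (auto intro: integrable_on_subinterval[OF Suc.prems])
  ultimately show ?case
    using Suc by (simp add: Henstock_Kurzweil_Integration.integral_combine)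
qed simp

lemma dissipative_integral_equation_step_within:
  fixes Z G h :: "real \<Rightarrow> 'a::euclidean_space"
  assumes a: "a \<in> {s..t}" and c: "c \<in> {s..t}" and "a \<le> c"
    and G: "G integrable_on {s..t}" and h: "h absolutely_integrable_on {s..t}"
    and Z: "\<And>u. u \<in> {s..t} \<Longrightarrow> Z u = integral {s..u} (\<lambda>v. G v + h v)"
    and dissip: "Z a \<bullet> G a \<le> - lam * (norm (Z a))\<^sup>2" and lip: "norm (G a) \<le> L * norm (Z a)"
    and osc: "\<And>v. v \<in> {a..c} \<Longrightarrow> norm (G v - G a) \<le> \<eta>" and "0 \<le> \<eta>"
  shows "exp (lam * c) * norm (Z c) \<le> exp (L\<^sup>2 / 2 * (c - a)\<^sup>2) * (exp (lam * a) * norm (Z a))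
    + ((exp (lam * s) + exp (lam * t)) * ((c - a) * \<eta>)
       + exp (\<bar>lam\<bar> * (c - a)) * integral {a..c} (\<lambda>v. exp (lam * v) * norm (h v)))"
proof -
  have sub: "{a..c} \<subseteq> {s..t}" using a c by auto
  have "exp (lam * c) \<le> exp (lam * s) + exp (lam * t)"
    using c by (cases "0 \<le> lam") (auto simp: add_increasing2 add_increasing mult_left_mono mult_left_mono_neg)
  then have "exp (lam * c) * ((c - a) * \<eta>) \<le> (exp (lam * s) + exp (lam * t)) * ((c - a) * \<eta>)"
    using \<open>a \<le> c\<close> \<open>0 \<le> \<eta>\<close> by (intro mult_right_mono) auto
  moreover have "exp (lam * c) * norm (Z c) \<le> exp (L\<^sup>2 / 2 * (c - a)\<^sup>2) * (exp (lam * a) * norm (Z a))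
      + exp (lam * c) * ((c - a) * \<eta>) + exp (\<bar>lam\<bar> * (c - a)) * integral {a..c} (\<lambda>v. exp (lam * v) * norm (h v))"
  proof (rule dissipative_integral_equation_step[where Z = Z and G = G and h = h, OF \<open>a \<le> c\<close> _ _ _ dissip lip osc])
    have "(\<lambda>v. G v + h v) integrable_on {s..t}"
      using G h by (auto intro: integrable_add simp: absolutely_integrable_on_def)
    then have "(\<lambda>v. G v + h v) integrable_on {s..c}"
      by (rule integrable_on_subinterval) (use c in auto)
    then have "integral {s..a} (\<lambda>v. G v + h v) + integral {a..c} (\<lambda>v. G v + h v)
        = integral {s..c} (\<lambda>v. G v + h v)"
      using a \<open>a \<le> c\<close> by (intro Henstock_Kurzweil_Integration.integral_combine) auto
    then show "Z c = Z a + integral {a..c} (\<lambda>v. G v + h v)"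
      using Z[OF a] Z[OF c] by simp
  qed (use integrable_on_subinterval[OF G sub] absolutely_integrable_on_subinterval[OF h sub] in auto)
  ultimately show ?thesis by linarith
qed

lemma dissipative_integral_equation_bound_discrete:
  fixes Z G h :: "real \<Rightarrow> 'a::euclidean_space" and N :: nat
  assumes st: "s < t" and N: "0 < N"
    and G: "G integrable_on {s..t}" and h: "h absolutely_integrable_on {s..t}"
    and Z: "\<And>u. u \<in> {s..t} \<Longrightarrow> Z u = integral {s..u} (\<lambda>v. G v + h v)"
    and dissip: "\<And>v. v \<in> {s..t} \<Longrightarrow> Z v \<bullet> G v \<le> - lam * (norm (Z v))\<^sup>2"
    and lip: "\<And>v. v \<in> {s..t} \<Longrightarrow> norm (G v) \<le> L * norm (Z v)"
    and osc: "\<And>v v'. v \<in> {s..t} \<Longrightarrow> v' \<in> {s..t} \<Longrightarrow> \<bar>v - v'\<bar> \<le> (t - s) / N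
      \<Longrightarrow> norm (G v - G v') \<le> \<eta>"
  shows "exp (lam * t) * norm (Z t) \<le> exp (L\<^sup>2 / 2 * (t - s)\<^sup>2 / N)
    * ((exp (lam * s) + exp (lam * t)) * (t - s) * \<eta>
       + exp (\<bar>lam\<bar> * (t - s) / N) * integral {s..t} (\<lambda>v. exp (lam * v) * norm (h v)))"
proof -
  define d where "d = (t - s) / N"
  define u where "u k = s + real k * d" for k
  define B where "B = exp (lam * s) + exp (lam * t)"
  let ?f = "\<lambda>v. exp (lam * v) * norm (h v)"
  have d: "0 < d" "real N * d = t - s" using st N by (simp_all add: d_def)
  have u: "u 0 = s" "u N = t" "u (Suc k) - u k = d" for k
    using d by (simp_all add: u_def algebra_simps)
  have u_in: "u k \<in> {s..t}" if "k \<le> N" for k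
    using that d mult_right_mono[of "real k" "real N" d] by (auto simp: u_def)
  have f: "?f integrable_on {s..t}"
    using h by (rule integrable_on_continuous_mult_norm) (intro continuous_intros)
  have \<eta>: "0 \<le> \<eta>" using osc[of s s] st by simp
  have "exp (lam * u N) * norm (Z (u N))
      \<le> exp (L\<^sup>2 / 2 * d\<^sup>2) ^ N * (exp (lam * u 0) * norm (Z (u 0))
        + (\<Sum>k<N. B * (d * \<eta>) + exp (\<bar>lam\<bar> * d) * integral {u k..u (Suc k)} ?f))"
  proof (rule discrete_gronwall)
    fix k assume "k < N"
    then have a: "u k \<in> {s..t}" and c: "u (Suc k) \<in> {s..t}" using u_in by auto
    have "u k \<le> u (Suc k)" using u(3)[of k] d(1) by linarith
    moreover have "norm (G v - G (u k)) \<le> \<eta>" if "v \<in> {u k..u (Suc k)}" for v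
      using that a c u(3)[of k] by (intro osc) (auto simp: d_def)
    ultimately show "exp (lam * u (Suc k)) * norm (Z (u (Suc k)))
      \<le> exp (L\<^sup>2 / 2 * d\<^sup>2) * (exp (lam * u k) * norm (Z (u k)))
        + (B * (d * \<eta>) + exp (\<bar>lam\<bar> * d) * integral {u k..u (Suc k)} ?f)"
      using dissipative_integral_equation_step_within[OF a c _ G h Z dissip[OF a] lip[OF a] _ \<eta>]
      unfolding B_def u(3) by blast
    show "0 \<le> B * (d * \<eta>) + exp (\<bar>lam\<bar> * d) * integral {u k..u (Suc k)} ?f"
      using a c d \<eta> by (intro add_nonneg_nonneg mult_nonneg_nonneg integral_nonneg
          integrable_on_subinterval[OF f]) (auto simp: B_def)
  qed simp
  also have "(\<Sum>k<N. B * (d * \<eta>) + exp (\<bar>lam\<bar> * d) * integral {u k..u (Suc k)} ?f)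
      = real N * (B * (d * \<eta>)) + exp (\<bar>lam\<bar> * d) * (\<Sum>k<N. integral {u k..u (Suc k)} ?f)"
    by (simp add: sum.distrib sum_distrib_left)
  also have "\<dots> = B * (t - s) * \<eta> + exp (\<bar>lam\<bar> * d) * integral {s..t} ?f"
  proof -
    have "u k \<le> u (Suc k)" for k using u(3)[of k] d(1) by linarith
    then have "(\<Sum>k<N. integral {u k..u (Suc k)} ?f) = integral {s..t} ?f"
      using integral_sum_consecutive[where u = u and N = N and f = ?f] f u by simp
    then show ?thesis by (simp add: flip: d(2))
  qed
  also have "exp (L\<^sup>2 / 2 * d\<^sup>2) ^ N = exp (L\<^sup>2 / 2 * (t - s)\<^sup>2 / N)"
    using N by (simp add: exp_of_nat_mult[symmetric] d_def power2_eq_square)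
  finally show ?thesis
    using Z[of s] st by (simp add: u d_def B_def)
qed

lemma dissipative_integral_equation_bound_approx:
  fixes Z G h :: "real \<Rightarrow> 'a::euclidean_space"
  assumes st: "s < t" and "0 < \<eta>"
    and G: "continuous_on {s..t} G" and h: "h absolutely_integrable_on {s..t}"
    and Z: "\<And>u. u \<in> {s..t} \<Longrightarrow> Z u = integral {s..u} (\<lambda>v. G v + h v)"
    and dissip: "\<And>v. v \<in> {s..t} \<Longrightarrow> Z v \<bullet> G v \<le> - lam * (norm (Z v))\<^sup>2"
    and lip: "\<And>v. v \<in> {s..t} \<Longrightarrow> norm (G v) \<le> L * norm (Z v)"
  shows "exp (lam * t) * norm (Z t)
    \<le> (exp (lam * s) + exp (lam * t)) * (t - s) * \<eta> + integral {s..t} (\<lambda>v. exp (lam * v) * norm (h v))"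
proof -
  define J where "J = integral {s..t} (\<lambda>v. exp (lam * v) * norm (h v))"
  define B where "B = exp (lam * s) + exp (lam * t)"
  obtain \<delta> where "0 < \<delta>"
    and \<delta>: "\<And>v v'. v \<in> {s..t} \<Longrightarrow> v' \<in> {s..t} \<Longrightarrow> dist v' v < \<delta> \<Longrightarrow> dist (G v') (G v) < \<eta>"
    using compact_uniformly_continuous[OF G compact_Icc] \<open>0 < \<eta>\<close>
    unfolding uniformly_continuous_on_def by metis
  obtain N0 :: nat where N0: "(t - s) / \<delta> < N0" using reals_Archimedean2 by blast
  define R where "R N = exp (L\<^sup>2 / 2 * (t - s)\<^sup>2 / N) * (B * (t - s) * \<eta> + exp (\<bar>lam\<bar> * (t - s) / N) * J)"
    for N :: nat
  have "R \<longlonglongrightarrow> exp 0 * (B * (t - s) * \<eta> + exp 0 * J)"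
    unfolding R_def by (intro tendsto_intros)
  moreover have "exp (lam * t) * norm (Z t) \<le> R N" if "N \<ge> Suc N0" for N
  proof -
    have "0 < real N" "(t - s) / \<delta> < N" using N0 that by linarith+
    then have mesh: "(t - s) / N < \<delta>" using \<open>0 < \<delta>\<close> by (simp add: field_simps)
    show ?thesis
      unfolding R_def B_def J_def
    proof (rule dissipative_integral_equation_bound_discrete[OF st _ _ h Z dissip lip])
      show "G integrable_on {s..t}" using G by (rule integrable_continuous_interval)
      show "norm (G v - G v') \<le> \<eta>"
        if "v \<in> {s..t}" "v' \<in> {s..t}" "\<bar>v - v'\<bar> \<le> (t - s) / N" for v v'
        using \<delta>[OF that(2,1)] that(3) mesh by (simp add: dist_norm)
    qed (use that in auto)
  qed
  ultimately show ?thesis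
    unfolding B_def J_def by (intro LIMSEQ_le_const) auto
qed

lemma dissipative_integral_equation_bound:
  fixes Z G h :: "real \<Rightarrow> 'a::euclidean_space"
  assumes "s \<le> t"
    and G: "continuous_on {s..t} G" and h: "h absolutely_integrable_on {s..t}"
    and Z: "\<And>u. u \<in> {s..t} \<Longrightarrow> Z u = integral {s..u} (\<lambda>v. G v + h v)"
    and dissip: "\<And>v. v \<in> {s..t} \<Longrightarrow> Z v \<bullet> G v \<le> - lam * (norm (Z v))\<^sup>2"
    and lip: "\<And>v. v \<in> {s..t} \<Longrightarrow> norm (G v) \<le> L * norm (Z v)"
  shows "norm (Z t) \<le> integral {s..t} (\<lambda>v. exp (- lam * (t - v)) * norm (h v))"
proof (cases "s = t")
  case True
  then show ?thesis using Z[of t] by simp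
next
  case False
  then have st: "s < t" using \<open>s \<le> t\<close> by simp
  define J where "J = integral {s..t} (\<lambda>v. exp (lam * v) * norm (h v))"
  define B where "B = exp (lam * s) + exp (lam * t)"
  have "0 < B" by (simp add: B_def add_pos_pos)
  have "exp (lam * t) * norm (Z t) \<le> J"
  proof (rule field_le_epsilon)
    fix e :: real assume "0 < e"
    then show "exp (lam * t) * norm (Z t) \<le> J + e"
      using dissipative_integral_equation_bound_approx[OF st _ G h Z dissip lip, of "e / (B * (t - s))"]
        \<open>0 < B\<close> st by (simp add: B_def J_def)
  qed
  then have "norm (Z t) \<le> exp (- lam * t) * J"
    by (simp add: mult_exp_exp field_simps exp_minus)
  also have "\<dots> = integral {s..t} (\<lambda>v. exp (- lam * (t - v)) * norm (h v))"
    by (simp add: J_def mult_exp_exp algebra_simps flip: integral_mult_right)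
  finally show ?thesis .
qed

lemma continuous_on_integral_equation:
  fixes f w :: "real \<Rightarrow> 'a::euclidean_space"
  assumes f: "f integrable_on {s..t}" and w: "continuous_on {s..t} w"
    and P: "\<And>u. u \<in> {s..t} \<Longrightarrow> P u = x + integral {s..u} f + (w u - w s)"
  shows "continuous_on {s..t} P"
proof -
  have "continuous_on {s..t} (\<lambda>u. x + integral {s..u} f + (w u - w s))"
    by (intro continuous_intros indefinite_integral_continuous_1 f w)
  then show ?thesis by (rule continuous_on_eq) (simp add: P)
qed

lemma continuous_on_integral_equation_ge:
  fixes f w :: "real \<Rightarrow> 'a::euclidean_space"
  assumes w: "continuous_on {s..} w"
    and P: "\<forall>u\<ge>s. f integrable_on {s..u} \<and> P u = x + integral {s..u} f + (w u - w s)"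
  shows "continuous_on {s..u} P"
proof (cases "s \<le> u")
  case True
  show ?thesis
  proof (rule continuous_on_integral_equation[where f = f and w = w])
    show "continuous_on {s..u} w" using w by (rule continuous_on_subset) auto
  qed (use P True in auto)
qed simp

lemma continuous_on_joint_compose:
  assumes b: "continuous_on UNIV (\<lambda>p. b (fst p) (snd p))" and Q: "continuous_on S Q"
  shows "continuous_on S (\<lambda>v. b v (Q v))"
  using continuous_on_compose2[OF b continuous_on_Pair[OF continuous_on_id Q]] by simp

lemma solution_diff_norm_le:
  fixes b :: "real \<Rightarrow> 'a::euclidean_space \<Rightarrow> 'a" and P Q Y w :: "real \<Rightarrow> 'a"
  assumes "s \<le> t"
    and dissip: "\<And>v x y. (x - y) \<bullet> (b v x - b v y) \<le> - lam * (norm (x - y))\<^sup>2"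
    and lip: "\<And>v x y. norm (b v x - b v y) \<le> L * norm (x - y)"
    and b: "continuous_on UNIV (\<lambda>p. b (fst p) (snd p))"
    and P_int: "(\<lambda>v. b v (P v)) integrable_on {s..t}"
    and P_eq: "\<And>u. u \<in> {s..t} \<Longrightarrow> P u = x + integral {s..u} (\<lambda>v. b v (P v)) + (w u - w s)"
    and Y_int: "Y integrable_on {s..t}"
    and Q_eq: "\<And>u. u \<in> {s..t} \<Longrightarrow> Q u = x + integral {s..u} Y + (w u - w s)"
    and w: "continuous_on {s..t} w"
    and h: "(\<lambda>v. b v (Q v) - Y v) absolutely_integrable_on {s..t}"
  shows "norm (P t - Q t) \<le> integral {s..t} (\<lambda>v. exp (- lam * (t - v)) * norm (b v (Q v) - Y v))"
proof (rule dissipative_integral_equation_bound[OF \<open>s \<le> t\<close> _ h, where Z = "\<lambda>u. P u - Q u"])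
  have "continuous_on {s..t} (\<lambda>v. b v (P v))" "continuous_on {s..t} (\<lambda>v. b v (Q v))"
    using continuous_on_integral_equation[OF P_int w P_eq] continuous_on_integral_equation[OF Y_int w Q_eq]
    by (simp_all add: continuous_on_joint_compose[OF b])
  then show "continuous_on {s..t} (\<lambda>v. b v (P v) - b v (Q v))"
    by (intro continuous_intros)
  fix u assume u: "u \<in> {s..t}"
  then have "{s..u} \<subseteq> {s..t}" by auto
  then show "P u - Q u = integral {s..u} (\<lambda>v. b v (P v) - b v (Q v) + (b v (Q v) - Y v))"
    using P_eq[OF u] Q_eq[OF u]
    by (simp add: integral_diff integrable_on_subinterval[OF P_int] integrable_on_subinterval[OF Y_int])
qed (use dissip lip in auto)

lemma absolutely_integrable_on_if_weighted_nn_integral_finite: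
  fixes h :: "real \<Rightarrow> 'a::euclidean_space"
  assumes h: "h \<in> borel_measurable (restrict_space lborel {s..t})"
    and "0 < c" and w: "\<And>u. u \<in> {s..t} \<Longrightarrow> c \<le> w u"
    and fin: "(\<integral>\<^sup>+u\<in>{s..t}. ennreal (w u * norm (h u)) \<partial>lborel) \<noteq> \<infinity>"
  shows "h absolutely_integrable_on {s..t}"
proof -
  define S where "S = restrict_space lborel {s..t}"
  have nn_S: "(\<integral>\<^sup>+u. f u \<partial>S) = (\<integral>\<^sup>+u\<in>{s..t}. f u \<partial>lborel)" for f
    unfolding S_def by (rule nn_integral_restrict_space) simp
  have "ennreal c * (\<integral>\<^sup>+u. ennreal (norm (h u)) \<partial>S) = (\<integral>\<^sup>+u. ennreal (c * norm (h u)) \<partial>S)"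
    using h \<open>0 < c\<close> unfolding S_def[symmetric]
    by (subst nn_integral_cmult[symmetric]) (auto simp: ennreal_mult)
  also have "\<dots> \<le> (\<integral>\<^sup>+u. ennreal (w u * norm (h u)) \<partial>S)"
    using w by (intro nn_integral_mono ennreal_leI mult_right_mono) (auto simp: S_def)
  also have "\<dots> < \<infinity>" using fin by (simp add: nn_S less_top)
  finally have "(\<integral>\<^sup>+u. ennreal (norm (h u)) \<partial>S) < \<infinity>"
    using \<open>0 < c\<close> by (auto simp: ennreal_mult_less_top)
  then have "integrable S h"
    using h by (simp add: S_def integrable_iff_bounded)
  then have "integrable lborel (\<lambda>u. indicator {s..t} u *\<^sub>R h u)"
    unfolding S_def by (simp add: integrable_restrict_space)
  then show ?thesis
    by (simp add: set_integrable_def integrable_completion)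
qed

lemma solution_diff_norm_le_nn_integral:
  fixes b :: "real \<Rightarrow> 'a::euclidean_space \<Rightarrow> 'a" and P Q Y w :: "real \<Rightarrow> 'a"
  assumes "s \<le> t"
    and dissip: "\<And>v x y. (x - y) \<bullet> (b v x - b v y) \<le> - lam * (norm (x - y))\<^sup>2"
    and lip: "\<And>v x y. norm (b v x - b v y) \<le> L * norm (x - y)"
    and b: "continuous_on UNIV (\<lambda>p. b (fst p) (snd p))"
    and P_int: "(\<lambda>v. b v (P v)) integrable_on {s..t}"
    and P_eq: "\<And>u. u \<in> {s..t} \<Longrightarrow> P u = x + integral {s..u} (\<lambda>v. b v (P v)) + (w u - w s)"
    and Y_int: "Y integrable_on {s..t}" and Y_meas: "Y \<in> borel_measurable (restrict_space lborel {s..t})"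
    and Q_eq: "\<And>u. u \<in> {s..t} \<Longrightarrow> Q u = x + integral {s..u} Y + (w u - w s)"
    and w: "continuous_on {s..t} w"
  shows "ennreal (norm (P t - Q t))
    \<le> (\<integral>\<^sup>+u\<in>{s..t}. ennreal (exp (- lam * (t - u)) * norm (b u (Q u) - Y u)) \<partial>lborel)"
proof (cases "(\<integral>\<^sup>+u\<in>{s..t}. ennreal (exp (- lam * (t - u)) * norm (b u (Q u) - Y u)) \<partial>lborel) = \<infinity>")
  case False
  define h where "h u = b u (Q u) - Y u" for u
  have sets_eq: "sets (restrict_space lborel {s..t}) = sets (restrict_space borel {s..t})"
    by (rule sets_restrict_space_cong) simp
  have "continuous_on {s..t} (\<lambda>v. b v (Q v))"
    using continuous_on_integral_equation[OF Y_int w Q_eq] by (rule continuous_on_joint_compose[OF b])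
  then have "(\<lambda>v. b v (Q v)) \<in> borel_measurable (restrict_space lborel {s..t})"
    unfolding measurable_cong_sets[OF sets_eq refl] by (rule borel_measurable_continuous_on_restrict)
  then have "h \<in> borel_measurable (restrict_space lborel {s..t})"
    using Y_meas unfolding h_def by measurable
  moreover have "exp (- \<bar>lam\<bar> * (t - s)) \<le> exp (- lam * (t - u))" if "u \<in> {s..t}" for u
    using that by (auto intro!: mult_mono)
  ultimately have h_abs: "h absolutely_integrable_on {s..t}"
    using False unfolding h_def[symmetric]
    by (intro absolutely_integrable_on_if_weighted_nn_integral_finite[where c = "exp (- \<bar>lam\<bar> * (t - s))"]) auto
  have "norm (P t - Q t) \<le> integral {s..t} (\<lambda>v. exp (- lam * (t - v)) * norm (h v))"
    using solution_diff_norm_le[OF \<open>s \<le> t\<close> dissip lip b P_int P_eq Y_int Q_eq w] h_abs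
    unfolding h_def by blast
  moreover have "(\<lambda>v. exp (- lam * (t - v)) * norm (h v)) integrable_on {s..t}"
    by (rule integrable_on_continuous_mult_norm[OF h_abs]) (intro continuous_intros)
  then have "(\<integral>\<^sup>+u\<in>{s..t}. ennreal (exp (- lam * (t - u)) * norm (h u)) \<partial>lborel)
      = ennreal (integral {s..t} (\<lambda>v. exp (- lam * (t - v)) * norm (h v)))"
    by (intro nn_integral_has_integral_lebesgue' integrable_integral) auto
  ultimately show ?thesis by (simp add: h_def ennreal_leI)
qed simp

section \<open>Hoelder and Minkowski inequalities for \<open>Lp_norm\<close>\<close>

lemma Lp_norm_ennreal:
  assumes "0 \<le> p"
  shows "Lp_norm M (ennreal p) f =
    (if (\<integral>\<^sup>+x. ennreal (norm (f x) powr p) \<partial>M) = \<infinity> then \<infinity>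
     else ennreal (enn2real (\<integral>\<^sup>+x. ennreal (norm (f x) powr p) \<partial>M) powr (1 / p)))"
  using assms by (simp add: Lp_norm_def Let_def)

lemma Lp_norm_one: "Lp_norm M 1 f = (\<integral>\<^sup>+x. ennreal (norm (f x)) \<partial>M)"
  using Lp_norm_ennreal[of 1 M f] by (simp add: enn2real_1 ennreal_enn2real_if)

lemma Lp_norm_leI:
  assumes "0 < p" "0 \<le> c" and le: "(\<integral>\<^sup>+x. ennreal (norm (f x) powr p) \<partial>M) \<le> ennreal (c powr p)"
  shows "Lp_norm M (ennreal p) f \<le> ennreal c"
proof -
  obtain i where i: "(\<integral>\<^sup>+x. ennreal (norm (f x) powr p) \<partial>M) = ennreal i" "0 \<le> i" "i \<le> c powr p"
    using le by (cases "\<integral>\<^sup>+x. ennreal (norm (f x) powr p) \<partial>M") (auto simp: top_unique)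
  then have "i powr (1 / p) \<le> (c powr p) powr (1 / p)"
    using \<open>0 < p\<close> by (intro powr_mono2) auto
  then show ?thesis
    using i assms by (simp add: Lp_norm_ennreal powr_powr)
qed

lemma Lp_norm_norm: "Lp_norm M n (\<lambda>x. norm (f x)) = Lp_norm M n f"
  by (simp add: Lp_norm_def)

lemma Lp_norm_cong_AE:
  fixes f g :: "'a \<Rightarrow> 'b::{real_normed_vector, second_countable_topology}"
  assumes "f \<in> borel_measurable M" and "g \<in> borel_measurable M" and "AE x in M. f x = g x"
  shows "Lp_norm M n f = Lp_norm M n g"
proof -
  have "esssup M (\<lambda>x. ennreal (norm (f x))) = esssup M (\<lambda>x. ennreal (norm (g x)))"
    using assms by (intro esssup_AE_cong) (measurable, auto elim: eventually_mono)
  moreover have "(\<integral>\<^sup>+x. ennreal (norm (f x) powr enn2real n) \<partial>M)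
      = (\<integral>\<^sup>+x. ennreal (norm (g x) powr enn2real n) \<partial>M)"
    using assms by (intro nn_integral_cong_AE) (auto elim: eventually_mono)
  ultimately show ?thesis by (simp add: Lp_norm_def)
qed

lemma Lp_norm_scaleR_le:
  fixes f :: "'a \<Rightarrow> 'b::real_normed_vector"
  assumes f: "f \<in> borel_measurable M" and "0 \<le> c" and "0 < n"
  shows "Lp_norm M n (\<lambda>x. c *\<^sub>R f x) \<le> ennreal c * Lp_norm M n f"
proof (cases "n = \<infinity>")
  case True
  have "AE x in M. ennreal (norm (f x)) \<le> esssup M (\<lambda>x. ennreal (norm (f x)))"
    by (rule esssup_AE)
  then have "AE x in M. ennreal (norm (c *\<^sub>R f x)) \<le> ennreal c * esssup M (\<lambda>x. ennreal (norm (f x)))"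
    by eventually_elim (use \<open>0 \<le> c\<close> in \<open>simp add: ennreal_mult mult_left_mono\<close>)
  then show ?thesis
    using True f by (simp add: Lp_norm_def esssup_I)
next
  case False
  define p where "p = enn2real n"
  have n: "n = ennreal p" and p: "0 < p"
    using False \<open>0 < n\<close> by (auto simp: p_def ennreal_enn2real_if enn2real_positive_iff less_top)
  define I where "I = (\<integral>\<^sup>+x. ennreal (norm (f x) powr p) \<partial>M)"
  have scaled: "(\<integral>\<^sup>+x. ennreal (norm (c *\<^sub>R f x) powr p) \<partial>M) = ennreal (c powr p) * I"
    unfolding I_def using \<open>0 \<le> c\<close> f
    by (subst nn_integral_cmult[symmetric]) (auto simp: powr_mult ennreal_mult intro!: nn_integral_cong)
  show ?thesis
  proof (cases "I = \<infinity> \<or> c = 0")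
    case True
    then show ?thesis
      using \<open>0 \<le> c\<close> p by (auto simp: n Lp_norm_ennreal scaled I_def[symmetric] ennreal_mult_top)
  next
    case False
    then obtain i where i: "I = ennreal i" "0 \<le> i" by (cases I) auto
    then have "(\<integral>\<^sup>+x. ennreal (norm (c *\<^sub>R f x) powr p) \<partial>M) = ennreal (c powr p * i)"
      unfolding scaled by (simp add: ennreal_mult')
    then have "Lp_norm M n (\<lambda>x. c *\<^sub>R f x) = ennreal ((c powr p * i) powr (1 / p))"
      unfolding n Lp_norm_ennreal[OF less_imp_le[OF p]] using i by simp
    also have "\<dots> = ennreal c * ennreal (i powr (1 / p))"
      using \<open>0 \<le> c\<close> i p by (simp add: powr_mult powr_powr ennreal_mult)
    also have "\<dots> = ennreal c * Lp_norm M n f"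
      using i p by (simp add: n Lp_norm_ennreal I_def[symmetric])
    finally show ?thesis by simp
  qed
qed

lemma AE_eq_0_if_nn_integral_powr_eq_0:
  fixes f :: "'a \<Rightarrow> real"
  assumes "f \<in> borel_measurable M" and "(\<integral>\<^sup>+x. ennreal (f x powr r) \<partial>M) = 0"
  shows "AE x in M. f x = 0"
proof -
  have "AE x in M. ennreal (f x powr r) = 0"
    using assms by (subst nn_integral_0_iff_AE[symmetric]) auto
  then show ?thesis
    by eventually_elim (metis ennreal_eq_0_iff order_antisym powr_eq_0_iff powr_ge_zero)
qed

lemma Hoelder_inequality_pos:
  fixes a c :: "'a \<Rightarrow> real"
  assumes p: "1 < p" and q: "1 < q" and pq: "1 / p + 1 / q = 1"
    and a: "a \<in> borel_measurable M" "\<And>x. 0 \<le> a x"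
    and c: "c \<in> borel_measurable M" "\<And>x. 0 \<le> c x"
    and A: "(\<integral>\<^sup>+x. ennreal (a x powr q) \<partial>M) = ennreal A" "0 < A"
    and B: "(\<integral>\<^sup>+x. ennreal (c x powr p) \<partial>M) = ennreal B" "0 < B"
  shows "(\<integral>\<^sup>+x. ennreal (a x * c x) \<partial>M) \<le> ennreal (A powr (1 / q) * B powr (1 / p))"
proof -
  define \<alpha> where "\<alpha> = A powr (1 / q)"
  define \<beta> where "\<beta> = B powr (1 / p)"
  have "0 < \<alpha>" "0 < \<beta>" using A B by (simp_all add: \<alpha>_def \<beta>_def)
  have young: "a x * c x \<le> \<alpha> * \<beta> / (q * A) * a x powr q + \<alpha> * \<beta> / (p * B) * c x powr p" for x
  proof -
    have "(a x / \<alpha>) * (c x / \<beta>) \<le> (a x / \<alpha>) powr q / q + (c x / \<beta>) powr p / p"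
      using Youngs_inequality[of q p "a x / \<alpha>" "c x / \<beta>"] q p pq a(2) c(2) \<open>0 < \<alpha>\<close> \<open>0 < \<beta>\<close>
      by (simp add: add.commute)
    also have "(a x / \<alpha>) powr q = a x powr q / A"
      using a(2) \<open>0 < \<alpha>\<close> A q by (simp add: powr_divide \<alpha>_def powr_powr)
    also have "(c x / \<beta>) powr p = c x powr p / B"
      using c(2) \<open>0 < \<beta>\<close> B p by (simp add: powr_divide \<beta>_def powr_powr)
    finally show ?thesis
      using \<open>0 < \<alpha>\<close> \<open>0 < \<beta>\<close> by (simp add: field_simps)
  qed
  have "(\<integral>\<^sup>+x. ennreal (a x * c x) \<partial>M)
      \<le> (\<integral>\<^sup>+x. ennreal (\<alpha> * \<beta> / (q * A)) * ennreal (a x powr q)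
            + ennreal (\<alpha> * \<beta> / (p * B)) * ennreal (c x powr p) \<partial>M)"
    using young \<open>0 < \<alpha>\<close> \<open>0 < \<beta>\<close> A B p q
    by (intro nn_integral_mono) (simp add: ennreal_mult'[symmetric] flip: ennreal_plus)
  also have "\<dots> = ennreal (\<alpha> * \<beta> / (q * A)) * ennreal A + ennreal (\<alpha> * \<beta> / (p * B)) * ennreal B"
    using a c A B by (simp add: nn_integral_add nn_integral_cmult)
  also have "\<dots> = ennreal (\<alpha> * \<beta> * (1 / p + 1 / q))"
    using A B p q \<open>0 < \<alpha>\<close> \<open>0 < \<beta>\<close>
    by (simp add: ennreal_mult'[symmetric] flip: ennreal_plus) (simp add: field_simps)
  finally show ?thesis
    using pq by (simp add: \<alpha>_def \<beta>_def)
qed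

lemma Hoelder_inequality_nn_integral:
  fixes a c :: "'a \<Rightarrow> real"
  assumes p: "1 < p" and q: "1 < q" and pq: "1 / p + 1 / q = 1"
    and a: "a \<in> borel_measurable M" "\<And>x. 0 \<le> a x"
    and c: "c \<in> borel_measurable M" "\<And>x. 0 \<le> c x"
    and A: "(\<integral>\<^sup>+x. ennreal (a x powr q) \<partial>M) = ennreal A" and "0 \<le> A"
  shows "(\<integral>\<^sup>+x. ennreal (a x * c x) \<partial>M) \<le> ennreal (A powr (1 / q)) * Lp_norm M (ennreal p) c"
proof -
  define B where "B = (\<integral>\<^sup>+x. ennreal (c x powr p) \<partial>M)"
  have Lp: "Lp_norm M (ennreal p) c = (if B = \<infinity> then \<infinity> else ennreal (enn2real B powr (1 / p)))"
    unfolding B_def using p c(2) by (simp add: Lp_norm_ennreal)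
  have zero: "(\<integral>\<^sup>+x. ennreal (a x * c x) \<partial>M) = 0" if "AE x in M. a x = 0 \<or> c x = 0"
    using that a c by (subst nn_integral_0_iff_AE) (auto elim: eventually_mono)
  consider "A = 0" | "B = 0" | "0 < A" "B = \<infinity>" | B' where "B = ennreal B'" "0 < B'" "0 < A"
    using \<open>0 \<le> A\<close> by (cases B) force+
  then show ?thesis
  proof cases
    case 1
    then have "AE x in M. a x = 0"
      using A a by (intro AE_eq_0_if_nn_integral_powr_eq_0[where r = q]) auto
    then show ?thesis by (simp add: zero eventually_mono)
  next
    case 2
    then have "AE x in M. c x = 0"
      using c unfolding B_def by (intro AE_eq_0_if_nn_integral_powr_eq_0[where r = p]) auto
    then show ?thesis by (simp add: zero eventually_mono)
  next
    case 3
    then show ?thesis by (simp add: Lp ennreal_mult_top)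
  next
    case 4
    then have "(\<integral>\<^sup>+x. ennreal (c x powr p) \<partial>M) = ennreal B'" by (simp add: B_def)
    with 4 show ?thesis
      using Hoelder_inequality_pos[OF p q pq a c A(1)] by (simp add: Lp ennreal_mult)
  qed
qed

lemma less_esssup_iff:
  fixes f :: "'a \<Rightarrow> ennreal"
  assumes f: "f \<in> borel_measurable M"
  shows "c < esssup M f \<longleftrightarrow> emeasure M {x \<in> space M. c < f x} \<noteq> 0"
proof
  assume "c < esssup M f"
  then show "emeasure M {x \<in> space M. c < f x} \<noteq> 0" using esssup_pos_measure[OF f] by force
next
  assume pos: "emeasure M {x \<in> space M. c < f x} \<noteq> 0"
  show "c < esssup M f"
  proof (rule ccontr)
    assume "\<not> c < esssup M f"
    then have "emeasure M {x \<in> space M. c < f x} \<le> emeasure M {x \<in> space M. esssup M f < f x}"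
      using f by (intro emeasure_mono) auto
    then show False using pos esssup_zero_measure[of M f] by simp
  qed
qed

lemma borel_measurable_esssup:
  fixes g :: "'b \<Rightarrow> 'a \<Rightarrow> ennreal"
  assumes M: "sigma_finite_measure M" and g: "(\<lambda>(u, x). g u x) \<in> borel_measurable (S \<Otimes>\<^sub>M M)"
  shows "(\<lambda>u. esssup M (g u)) \<in> borel_measurable S"
proof (rule borel_measurableI_greater)
  fix c :: ennreal
  define Q where "Q = {p \<in> space (S \<Otimes>\<^sub>M M). c < g (fst p) (snd p)}"
  have "Q \<in> sets (S \<Otimes>\<^sub>M M)" unfolding Q_def using g by measurable
  then have "(\<lambda>u. emeasure M (Pair u -` Q)) \<in> borel_measurable S"
    by (rule sigma_finite_measure.measurable_emeasure_Pair[OF M])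
  then have "{u \<in> space S. emeasure M (Pair u -` Q) \<noteq> 0} \<in> sets S" by measurable
  also have "{u \<in> space S. emeasure M (Pair u -` Q) \<noteq> 0} = {u \<in> space S. c < esssup M (g u)}"
  proof (intro Collect_cong conj_cong refl)
    fix u assume u: "u \<in> space S"
    have "Pair u -` Q = {x \<in> space M. c < g u x}" using u by (auto simp: Q_def space_pair_measure)
    then show "(emeasure M (Pair u -` Q) \<noteq> 0) = (c < esssup M (g u))"
      using less_esssup_iff[OF measurable_Pair2[OF g u]] by simp
  qed
  finally show "{u \<in> space S. c < esssup M (g u)} \<in> sets S" .
qed

lemma borel_measurable_Lp_norm:
  fixes G :: "'b \<Rightarrow> 'a \<Rightarrow> 'c::{second_countable_topology, real_normed_vector}"
  assumes M: "sigma_finite_measure M" and G: "(\<lambda>(u, x). G u x) \<in> borel_measurable (S \<Otimes>\<^sub>M M)"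
  shows "(\<lambda>u. Lp_norm M n (G u)) \<in> borel_measurable S"
proof (cases "n = \<infinity>")
  case True
  have "(\<lambda>(u, x). ennreal (norm (G u x))) \<in> borel_measurable (S \<Otimes>\<^sub>M M)"
    using G by measurable
  then show ?thesis
    using borel_measurable_esssup[OF M] True by (simp add: Lp_norm_def)
next
  case False
  have "(\<lambda>u. \<integral>\<^sup>+x. ennreal (norm (G u x) powr enn2real n) \<partial>M) \<in> borel_measurable S"
    by (rule sigma_finite_measure.borel_measurable_nn_integral[OF M]) (use G in measurable)
  then show ?thesis
    using False by (simp add: Lp_norm_def Let_def)
qed


lemma AE_AE_le_esssup:
  fixes g :: "'b \<Rightarrow> 'a \<Rightarrow> ennreal"
  assumes M: "sigma_finite_measure M" and S: "sigma_finite_measure S"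
    and g: "(\<lambda>(u, x). g u x) \<in> borel_measurable (S \<Otimes>\<^sub>M M)"
  shows "AE x in M. AE u in S. g u x \<le> esssup M (g u)"
proof -
  interpret P: pair_sigma_finite S M
    using S M by (simp add: pair_sigma_finite_def)
  define E where "E u = esssup M (g u)" for u
  have E: "E \<in> borel_measurable S"
    unfolding E_def by (rule borel_measurable_esssup[OF M g])
  have g': "(\<lambda>p. g (fst p) (snd p)) \<in> borel_measurable (S \<Otimes>\<^sub>M M)"
    using g by (simp add: case_prod_beta')
  define B where "B = {p \<in> space (S \<Otimes>\<^sub>M M). E (fst p) < g (fst p) (snd p)}"
  have B: "B \<in> sets (S \<Otimes>\<^sub>M M)"
    unfolding B_def using E g' by measurable
  have "emeasure (S \<Otimes>\<^sub>M M) B = (\<integral>\<^sup>+u. emeasure M (Pair u -` B) \<partial>S)"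
    by (rule sigma_finite_measure.emeasure_pair_measure_alt[OF M B])
  also have "\<dots> = (\<integral>\<^sup>+u. 0 \<partial>S)"
  proof (rule nn_integral_cong)
    fix u assume u: "u \<in> space S"
    have "Pair u -` B = {x \<in> space M. E u < g u x}"
      using u by (auto simp: B_def space_pair_measure)
    then show "emeasure M (Pair u -` B) = 0"
      using esssup_zero_measure[of M "g u"] by (simp add: E_def)
  qed
  finally have "(\<integral>\<^sup>+x. emeasure S ((\<lambda>u. (u, x)) -` B) \<partial>M) = 0"
    by (simp add: P.emeasure_pair_measure_alt2[OF B, symmetric])
  then have "AE x in M. emeasure S ((\<lambda>u. (u, x)) -` B) = 0"
    by (subst nn_integral_0_iff_AE[symmetric]) (auto intro!: P.measurable_emeasure_Pair2 B)
  then show ?thesis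
    using AE_space
  proof eventually_elim
    case (elim x)
    have "(\<lambda>u. (u, x)) -` B = {u \<in> space S. E u < g u x}"
      using elim by (auto simp: B_def space_pair_measure)
    moreover have "(\<lambda>u. g u x) \<in> borel_measurable S"
      using measurable_Pair1[OF g elim(2)] by simp
    then have "{u \<in> space S. E u < g u x} \<in> sets S"
      using E by measurable
    ultimately show "AE u in S. g u x \<le> esssup M (g u)"
      using elim(1) by (intro AE_iff_measurable[THEN iffD2]) (auto simp: not_less E_def)
  qed
qed

lemma esssup_le_nn_integral_esssup:
  fixes f :: "'a \<Rightarrow> ennreal" and g :: "'b \<Rightarrow> 'a \<Rightarrow> ennreal"
  assumes M: "sigma_finite_measure M" and S: "sigma_finite_measure S"
    and f: "f \<in> borel_measurable M" and g: "(\<lambda>(u, x). g u x) \<in> borel_measurable (S \<Otimes>\<^sub>M M)"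
    and bound: "AE x in M. f x \<le> (\<integral>\<^sup>+u. g u x \<partial>S)"
  shows "esssup M f \<le> (\<integral>\<^sup>+u. esssup M (g u) \<partial>S)"
proof (rule esssup_I[OF f])
  show "AE x in M. f x \<le> (\<integral>\<^sup>+u. esssup M (g u) \<partial>S)"
    using bound AE_AE_le_esssup[OF M S g]
  proof eventually_elim
    case (elim x)
    then have "(\<integral>\<^sup>+u. g u x \<partial>S) \<le> (\<integral>\<^sup>+u. esssup M (g u) \<partial>S)"
      by (intro nn_integral_mono_AE)
    then show ?case using elim(1) by simp
  qed
qed

lemma nn_integral_powr_eq_SUP_min:
  fixes f :: "'a \<Rightarrow> real"
  assumes f: "f \<in> borel_measurable M" "\<And>x. 0 \<le> f x" and "0 < p"
  shows "(\<integral>\<^sup>+x. ennreal (f x powr p) \<partial>M) = (SUP K::nat. \<integral>\<^sup>+x. ennreal (min (f x) K powr p) \<partial>M)"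
proof -
  have "ennreal (f x powr p) = (SUP K::nat. ennreal (min (f x) K powr p))" for x
  proof (rule antisym)
    obtain K :: nat where "f x \<le> K" using real_arch_simple by blast
    then have "ennreal (f x powr p) = ennreal (min (f x) K powr p)" by simp
    then show "ennreal (f x powr p) \<le> (SUP K::nat. ennreal (min (f x) K powr p))"
      by (metis UNIV_I SUP_upper)
    show "(SUP K::nat. ennreal (min (f x) K powr p)) \<le> ennreal (f x powr p)"
      using f(2) \<open>0 < p\<close> by (intro SUP_least ennreal_leI powr_mono2) auto
  qed
  then have "(\<integral>\<^sup>+x. ennreal (f x powr p) \<partial>M) = (\<integral>\<^sup>+x. (SUP K::nat. ennreal (min (f x) K powr p)) \<partial>M)"
    by simp
  also have "\<dots> = (SUP K::nat. \<integral>\<^sup>+x. ennreal (min (f x) K powr p) \<partial>M)"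
  proof (rule nn_integral_monotone_convergence_SUP)
    show "incseq (\<lambda>K x. ennreal (min (f x) (real K) powr p))"
      using f(2) \<open>0 < p\<close> by (auto simp: incseq_def le_fun_def intro!: ennreal_leI powr_mono2)
  qed (use f(1) in measurable)
  finally show ?thesis .
qed


lemma le_powr_if_le_powr_mult:
  fixes r T :: real
  assumes "0 \<le> r" "0 < p" "1 / p + 1 / q = 1" and le: "r \<le> r powr (1 / q) * T"
  shows "r \<le> T powr p"
proof (cases "r = 0")
  case False
  then have "0 < r" using \<open>0 \<le> r\<close> by simp
  then have "r powr (1 / p) * r powr (1 / q) \<le> T * r powr (1 / q)"
    using le assms(3) by (simp add: mult.commute flip: powr_add)
  then have "r powr (1 / p) \<le> T" using \<open>0 < r\<close> by simp
  then have "(r powr (1 / p)) powr p \<le> T powr p"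
    using \<open>0 < p\<close> \<open>0 < r\<close> by (intro powr_mono2) auto
  then show ?thesis using \<open>0 < p\<close> \<open>0 < r\<close> by (simp add: powr_powr)
qed (use le in simp)

lemma Minkowski_integral_self_bound:
  fixes Z :: "'a \<Rightarrow> real" and G :: "'b \<Rightarrow> 'a \<Rightarrow> real"
  assumes M: "sigma_finite_measure M" and S: "sigma_finite_measure S"
    and Z: "Z \<in> borel_measurable M" "\<And>x. 0 \<le> Z x"
    and G: "(\<lambda>(u, x). G u x) \<in> borel_measurable (S \<Otimes>\<^sub>M M)" "\<And>u x. 0 \<le> G u x"
    and bound: "AE x in M. ennreal (Z x) \<le> (\<integral>\<^sup>+u. ennreal (G u x) \<partial>S)"
    and p: "1 < p" and q: "1 < q" and pq: "1 / p + 1 / q = 1"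
    and r: "(\<integral>\<^sup>+x. ennreal (Z x powr p) \<partial>M) = ennreal r" "0 \<le> r"
  shows "ennreal r \<le> ennreal (r powr (1 / q)) * (\<integral>\<^sup>+u. Lp_norm M (ennreal p) (G u) \<partial>S)"
proof -
  interpret P: pair_sigma_finite S M
    using S M by (simp add: pair_sigma_finite_def)
  have pq': "(p - 1) * q = p"
    using pq p q by (simp add: field_simps)
  have G': "(\<lambda>p. G (fst p) (snd p)) \<in> borel_measurable (S \<Otimes>\<^sub>M M)"
    using G(1) by (simp add: case_prod_beta')
  have "ennreal r = (\<integral>\<^sup>+x. ennreal (Z x powr (p - 1)) * ennreal (Z x) \<partial>M)"
    unfolding r(1)[symmetric] using Z(2) p
    by (intro nn_integral_cong) (simp add: ennreal_mult'[symmetric] powr_diff)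
  also have "\<dots> \<le> (\<integral>\<^sup>+x. ennreal (Z x powr (p - 1)) * (\<integral>\<^sup>+u. ennreal (G u x) \<partial>S) \<partial>M)"
    using bound by (intro nn_integral_mono_AE) (auto elim!: eventually_mono intro: mult_left_mono)
  also have "\<dots> = (\<integral>\<^sup>+x. (\<integral>\<^sup>+u. ennreal (Z x powr (p - 1) * G u x) \<partial>S) \<partial>M)"
  proof (rule nn_integral_cong)
    fix x assume "x \<in> space M"
    then have "(\<lambda>u. G u x) \<in> borel_measurable S"
      using measurable_Pair1[OF G(1)] by simp
    then show "ennreal (Z x powr (p - 1)) * (\<integral>\<^sup>+u. ennreal (G u x) \<partial>S)
        = (\<integral>\<^sup>+u. ennreal (Z x powr (p - 1) * G u x) \<partial>S)"
      using G(2) by (subst nn_integral_cmult[symmetric]) (auto simp: ennreal_mult)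
  qed
  also have "\<dots> = (\<integral>\<^sup>+u. (\<integral>\<^sup>+x. ennreal (Z x powr (p - 1) * G u x) \<partial>M) \<partial>S)"
    by (rule P.Fubini') (use Z(1) G' in measurable)
  also have "\<dots> \<le> (\<integral>\<^sup>+u. ennreal (r powr (1 / q)) * Lp_norm M (ennreal p) (G u) \<partial>S)"
  proof (rule nn_integral_mono)
    fix u assume "u \<in> space S"
    then have "G u \<in> borel_measurable M"
      using measurable_Pair2[OF G(1)] by simp
    moreover have "(\<integral>\<^sup>+x. ennreal ((Z x powr (p - 1)) powr q) \<partial>M) = ennreal r"
      unfolding r(1)[symmetric] by (simp add: powr_powr pq')
    ultimately show "(\<integral>\<^sup>+x. ennreal (Z x powr (p - 1) * G u x) \<partial>M)
        \<le> ennreal (r powr (1 / q)) * Lp_norm M (ennreal p) (G u)"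
      using p q pq G(2) Z(1) r(2) by (intro Hoelder_inequality_nn_integral) auto
  qed
  also have "\<dots> = ennreal (r powr (1 / q)) * (\<integral>\<^sup>+u. Lp_norm M (ennreal p) (G u) \<partial>S)"
    using borel_measurable_Lp_norm[OF M G(1)] by (simp add: nn_integral_cmult)
  finally show ?thesis .
qed

lemma Minkowski_integral_bounded:
  fixes Z :: "'a \<Rightarrow> real" and G :: "'b \<Rightarrow> 'a \<Rightarrow> real"
  assumes M: "finite_measure M" and S: "sigma_finite_measure S"
    and Z: "Z \<in> borel_measurable M" "\<And>x. 0 \<le> Z x" "\<And>x. Z x \<le> K"
    and G: "(\<lambda>(u, x). G u x) \<in> borel_measurable (S \<Otimes>\<^sub>M M)" "\<And>u x. 0 \<le> G u x"
    and bound: "AE x in M. ennreal (Z x) \<le> (\<integral>\<^sup>+u. ennreal (G u x) \<partial>S)"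
    and p: "1 < p" and T: "(\<integral>\<^sup>+u. Lp_norm M (ennreal p) (G u) \<partial>S) = ennreal T" "0 \<le> T"
  shows "(\<integral>\<^sup>+x. ennreal (Z x powr p) \<partial>M) \<le> ennreal (T powr p)"
proof -
  interpret M: finite_measure M by (rule M)
  define q where "q = p / (p - 1)"
  have q: "1 < q" "1 / p + 1 / q = 1"
    using p by (auto simp: q_def field_simps)
  have "(\<integral>\<^sup>+x. ennreal (Z x powr p) \<partial>M) \<le> (\<integral>\<^sup>+x. ennreal (K powr p) \<partial>M)"
    using Z p by (intro nn_integral_mono ennreal_leI powr_mono2) auto
  also have "\<dots> < \<infinity>"
    using M.emeasure_finite[of "space M"] by (simp add: ennreal_mult_eq_top_iff less_top[symmetric])
  finally obtain r where r: "(\<integral>\<^sup>+x. ennreal (Z x powr p) \<partial>M) = ennreal r" "0 \<le> r"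
    by (cases "\<integral>\<^sup>+x. ennreal (Z x powr p) \<partial>M") auto
  have "ennreal r \<le> ennreal (r powr (1 / q) * T)"
    using Minkowski_integral_self_bound[OF M.sigma_finite_measure_axioms S Z(1,2) G bound p q r] T
    by (simp add: ennreal_mult)
  then have "r \<le> T powr p"
    using r(2) p q(2) T(2) by (intro le_powr_if_le_powr_mult) (auto simp: ennreal_le_iff)
  then show ?thesis using r by simp
qed

lemma Minkowski_integral_Lp:
  fixes Z :: "'a \<Rightarrow> 'c::{second_countable_topology, real_normed_vector}"
    and G :: "'b \<Rightarrow> 'a \<Rightarrow> real"
  assumes M: "finite_measure M" and S: "sigma_finite_measure S" and Z: "Z \<in> borel_measurable M"
    and G: "(\<lambda>(u, x). G u x) \<in> borel_measurable (S \<Otimes>\<^sub>M M)" "\<And>u x. 0 \<le> G u x"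
    and bound: "AE x in M. ennreal (norm (Z x)) \<le> (\<integral>\<^sup>+u. ennreal (G u x) \<partial>S)"
    and "1 < p"
  shows "Lp_norm M (ennreal p) Z \<le> (\<integral>\<^sup>+u. Lp_norm M (ennreal p) (G u) \<partial>S)"
proof (cases "(\<integral>\<^sup>+u. Lp_norm M (ennreal p) (G u) \<partial>S) = \<infinity>")
  case False
  then obtain T where T: "(\<integral>\<^sup>+u. Lp_norm M (ennreal p) (G u) \<partial>S) = ennreal T" "0 \<le> T"
    by (cases "\<integral>\<^sup>+u. Lp_norm M (ennreal p) (G u) \<partial>S") auto
  \<comment> \<open>truncating \<open>Z\<close> makes \<open>\<integral> Z^p\<close> finite, so that it can be divided out\<close>
  have "(\<integral>\<^sup>+x. ennreal (min (norm (Z x)) K powr p) \<partial>M) \<le> ennreal (T powr p)" for K :: nat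
  proof (rule Minkowski_integral_bounded[where K = "real K", OF M S _ _ _ G _ \<open>1 < p\<close> T])
    show "AE x in M. ennreal (min (norm (Z x)) K) \<le> (\<integral>\<^sup>+u. ennreal (G u x) \<partial>S)"
      using bound by eventually_elim (rule order_trans[OF ennreal_leI], auto)
  qed (use Z in auto)
  then have "(\<integral>\<^sup>+x. ennreal (norm (Z x) powr p) \<partial>M) \<le> ennreal (T powr p)"
    using Z \<open>1 < p\<close> by (subst nn_integral_powr_eq_SUP_min) (auto intro: SUP_least)
  then show ?thesis
    using T \<open>1 < p\<close> by (simp add: Lp_norm_leI)
qed simp

lemma Minkowski_integral_inequality:
  fixes Z :: "'a \<Rightarrow> 'c::{second_countable_topology, real_normed_vector}"
    and G :: "'b \<Rightarrow> 'a \<Rightarrow> real"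
  assumes M: "finite_measure M" and S: "sigma_finite_measure S" and Z: "Z \<in> borel_measurable M"
    and G: "(\<lambda>(u, x). G u x) \<in> borel_measurable (S \<Otimes>\<^sub>M M)" "\<And>u x. 0 \<le> G u x"
    and bound: "AE x in M. ennreal (norm (Z x)) \<le> (\<integral>\<^sup>+u. ennreal (G u x) \<partial>S)"
    and "1 \<le> n"
  shows "Lp_norm M n Z \<le> (\<integral>\<^sup>+u. Lp_norm M n (G u) \<partial>S)"
proof -
  interpret M: finite_measure M by (rule M)
  interpret P: pair_sigma_finite S M
    using S M.sigma_finite_measure_axioms by (simp add: pair_sigma_finite_def)
  have G': "(\<lambda>p. G (fst p) (snd p)) \<in> borel_measurable (S \<Otimes>\<^sub>M M)"
    using G(1) by (simp add: case_prod_beta')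
  consider "n = \<infinity>" | "n = 1" | p where "n = ennreal p" "1 < p"
    using \<open>1 \<le> n\<close> by (cases n) (auto simp: ennreal_1[symmetric] simp del: ennreal_1 dest: order_le_imp_less_or_eq)
  then show ?thesis
  proof cases
    case 1
    have "(\<lambda>(u, x). ennreal (G u x)) \<in> borel_measurable (S \<Otimes>\<^sub>M M)"
      unfolding case_prod_beta' using G' by measurable
    then have "esssup M (\<lambda>x. ennreal (norm (Z x))) \<le> (\<integral>\<^sup>+u. esssup M (\<lambda>x. ennreal (G u x)) \<partial>S)"
      using Z by (intro esssup_le_nn_integral_esssup[OF M.sigma_finite_measure_axioms S _ _ bound]) auto
    then show ?thesis using 1 G(2) by (simp add: Lp_norm_def)
  next
    case 2
    have "(\<integral>\<^sup>+x. ennreal (norm (Z x)) \<partial>M) \<le> (\<integral>\<^sup>+x. (\<integral>\<^sup>+u. ennreal (G u x) \<partial>S) \<partial>M)"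
      using bound by (rule nn_integral_mono_AE)
    also have "\<dots> = (\<integral>\<^sup>+u. (\<integral>\<^sup>+x. ennreal (G u x) \<partial>M) \<partial>S)"
      by (rule P.Fubini') (use G' in measurable)
    finally show ?thesis using 2 G(2) by (simp add: Lp_norm_one)
  next
    case 3
    then show ?thesis using Minkowski_integral_Lp[OF M S Z G bound] by simp
  qed
qed

lemma Minkowski_integral_weighted:
  fixes Z :: "'a \<Rightarrow> 'c::{second_countable_topology, real_normed_vector}"
    and H :: "'b \<Rightarrow> 'a \<Rightarrow> 'e::{second_countable_topology, real_normed_vector}"
  assumes M: "finite_measure M" and S: "sigma_finite_measure S" and Z: "Z \<in> borel_measurable M"
    and H: "(\<lambda>(u, x). H u x) \<in> borel_measurable (S \<Otimes>\<^sub>M M)"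
    and w: "w \<in> borel_measurable S" "\<And>u. 0 \<le> w u"
    and bound: "AE x in M. ennreal (norm (Z x)) \<le> (\<integral>\<^sup>+u. ennreal (w u * norm (H u x)) \<partial>S)"
    and "1 \<le> n"
  shows "Lp_norm M n Z \<le> (\<integral>\<^sup>+u. ennreal (w u) * Lp_norm M n (H u) \<partial>S)"
proof -
  have H': "(\<lambda>p. H (fst p) (snd p)) \<in> borel_measurable (S \<Otimes>\<^sub>M M)"
    using H by (simp add: case_prod_beta')
  have "Lp_norm M n Z \<le> (\<integral>\<^sup>+u. Lp_norm M n (\<lambda>x. w u * norm (H u x)) \<partial>S)"
  proof (rule Minkowski_integral_inequality[OF M S Z _ _ bound \<open>1 \<le> n\<close>])
    show "(\<lambda>(u, x). w u * norm (H u x)) \<in> borel_measurable (S \<Otimes>\<^sub>M M)"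
      unfolding case_prod_beta' using H' w(1) by measurable
  qed (simp add: w(2))
  also have "\<dots> \<le> (\<integral>\<^sup>+u. ennreal (w u) * Lp_norm M n (H u) \<partial>S)"
  proof (rule nn_integral_mono)
    fix u assume "u \<in> space S"
    then have "(\<lambda>x. norm (H u x)) \<in> borel_measurable M"
      using measurable_Pair2[OF H] by simp
    then have "Lp_norm M n (\<lambda>x. w u *\<^sub>R norm (H u x)) \<le> ennreal (w u) * Lp_norm M n (\<lambda>x. norm (H u x))"
      using w(2) less_le_trans[OF zero_less_one \<open>1 \<le> n\<close>] by (intro Lp_norm_scaleR_le) auto
    then show "Lp_norm M n (\<lambda>x. w u * norm (H u x)) \<le> ennreal (w u) * Lp_norm M n (H u)"
      by (simp add: Lp_norm_norm)
  qed
  finally show ?thesis .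
qed

lemma Minkowski_integral_Icc:
  fixes Z :: "'a \<Rightarrow> 'c::{second_countable_topology, real_normed_vector}"
    and H K :: "real \<Rightarrow> 'a \<Rightarrow> 'e::{second_countable_topology, real_normed_vector}"
  assumes M: "finite_measure M" and Z: "Z \<in> borel_measurable M"
    and H: "\<And>u. u \<in> {s..t} \<Longrightarrow> H u \<in> borel_measurable M"
    and K: "(\<lambda>(u, x). K u x) \<in> borel_measurable (restrict_space lborel {s..} \<Otimes>\<^sub>M M)"
    and KH: "AE x in M. \<forall>u\<in>{s..t}. K u x = H u x"
    and w: "w \<in> borel_measurable borel" "\<And>u. 0 \<le> w u"
    and bound: "AE x in M. ennreal (norm (Z x)) \<le> (\<integral>\<^sup>+u\<in>{s..t}. ennreal (w u * norm (H u x)) \<partial>lborel)"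
    and "1 \<le> n"
  shows "Lp_norm M n Z \<le> (\<integral>\<^sup>+u\<in>{s..t}. ennreal (w u) * Lp_norm M n (H u) \<partial>lborel)"
proof -
  define S where "S = restrict_space lborel {s..}"
  define c where "c u = indicator {s..t} u * w u" for u :: real
  have S_Icc: "(\<integral>\<^sup>+u. f u * indicator {s..t} u \<partial>S) = (\<integral>\<^sup>+u\<in>{s..t}. f u \<partial>lborel)" for f
    unfolding S_def by (subst nn_integral_restrict_space) (auto intro!: nn_integral_cong split: split_indicator)
  have "Lp_norm M n Z \<le> (\<integral>\<^sup>+u. ennreal (c u) * Lp_norm M n (K u) \<partial>S)"
  proof (rule Minkowski_integral_weighted[OF M _ Z K[folded S_def] _ _ _ \<open>1 \<le> n\<close>])
    show "sigma_finite_measure S"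
      unfolding S_def by (intro sigma_finite_measure_restrict_space) (auto intro: lborel.sigma_finite_measure_axioms)
    show "c \<in> borel_measurable S"
      unfolding S_def c_def using w(1) by (intro measurable_restrict_space1) measurable
    show "AE x in M. ennreal (norm (Z x)) \<le> (\<integral>\<^sup>+u. ennreal (c u * norm (K u x)) \<partial>S)"
      using bound KH
    proof eventually_elim
      case (elim x)
      have "(\<integral>\<^sup>+u. ennreal (c u * norm (K u x)) \<partial>S) = (\<integral>\<^sup>+u. ennreal (w u * norm (H u x)) * indicator {s..t} u \<partial>S)"
        using elim(2) by (intro nn_integral_cong) (simp add: c_def split: split_indicator)
      then show ?case using elim(1) by (simp add: S_Icc)
    qed
  qed (simp add: c_def w(2))
  also have "\<dots> = (\<integral>\<^sup>+u\<in>{s..t}. ennreal (w u) * Lp_norm M n (H u) \<partial>lborel)"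
    unfolding S_Icc[symmetric]
  proof (intro nn_integral_cong)
    fix u assume "u \<in> space S"
    then have "K u \<in> borel_measurable M"
      using measurable_Pair2[OF K] by (simp add: S_def)
    then have "Lp_norm M n (K u) = Lp_norm M n (H u)" if "u \<in> {s..t}"
      using KH H[OF that] that by (intro Lp_norm_cong_AE) (auto elim: eventually_mono)
    then show "ennreal (c u) * Lp_norm M n (K u) = ennreal (w u) * Lp_norm M n (H u) * indicator {s..t} u"
      by (simp add: c_def split: split_indicator)
  qed
  finally show ?thesis .
qed

section \<open>Consequences of the hypotheses on the drift and on the paths\<close>

lemma C3_bounded_derivs_imp_lipschitz:
  fixes b :: "real \<Rightarrow> 'd::euclidean_space \<Rightarrow> 'd"
  assumes "C3_bounded_derivs b"
  obtains L where "\<And>v x y. norm (b v x - b v y) \<le> L * norm (x - y)"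
proof -
  obtain D :: "real \<Rightarrow> 'd \<Rightarrow> 'd \<Rightarrow>\<^sub>L 'd" and L
    where D: "\<And>v x. (b v has_derivative blinfun_apply (D v x)) (at x)"
      and bound: "\<And>v x. norm (D v x) \<le> L"
    using assms unfolding C3_bounded_derivs_def by metis
  have "norm (b v x - b v y) \<le> L * norm (x - y)" for v x y
  proof (rule differentiable_bound[of UNIV])
    show "(b v has_derivative blinfun_apply (D v z)) (at z within UNIV)" for z
      using D by simp
    show "onorm (blinfun_apply (D v z)) \<le> L" for z
      using bound[of v z] by (simp add: norm_blinfun.rep_eq)
  qed auto
  then show ?thesis by (rule that)
qed

lemma smooth_in_time_imp_isCont:
  assumes "smooth_in_time b"
  shows "isCont (\<lambda>t. b t x) r"
proof -
  obtain f where f0: "f 0 = (\<lambda>t. b t x)" and f: "\<And>k t. (f k has_vector_derivative f (Suc k) t) (at t)"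
    using assms unfolding smooth_in_time_def by metis
  show ?thesis
    using has_vector_derivative_continuous[OF f[of 0 r]] by (simp add: f0)
qed

lemma continuous_on_if_uniformly_lipschitz:
  fixes b :: "'t::metric_space \<Rightarrow> 'a::real_normed_vector \<Rightarrow> 'b::real_normed_vector"
  assumes cont: "\<And>x r. isCont (\<lambda>t. b t x) r"
    and lip: "\<And>v x y. norm (b v x - b v y) \<le> L * norm (x - y)"
  shows "continuous_on UNIV (\<lambda>p. b (fst p) (snd p))"
proof (intro continuous_at_imp_continuous_on ballI)
  fix p0 :: "'t \<times> 'a"
  obtain t0 x0 where p0: "p0 = (t0, x0)" by fastforce
  have "((\<lambda>p. b (fst p) x0) \<longlongrightarrow> b t0 x0) (at p0)"
    by (rule isCont_tendsto_compose[OF cont]) (use tendsto_fst[OF tendsto_ident_at, of p0 UNIV] in \<open>simp add: p0\<close>)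
  moreover have "((\<lambda>p. b (fst p) (snd p) - b (fst p) x0) \<longlongrightarrow> 0) (at p0)"
  proof (rule Lim_null_comparison)
    show "\<forall>\<^sub>F p in at p0. norm (b (fst p) (snd p) - b (fst p) x0) \<le> L * norm (snd p - x0)"
      using lip by simp
    have "(snd \<longlongrightarrow> x0) (at p0)"
      using tendsto_snd[OF tendsto_ident_at, of p0 UNIV] by (simp add: p0)
    then have "((\<lambda>p. L * norm (snd p - x0)) \<longlongrightarrow> L * norm (x0 - x0)) (at p0)"
      by (intro tendsto_intros)
    then show "((\<lambda>p. L * norm (snd p - x0)) \<longlongrightarrow> 0) (at p0)" by simp
  qed
  ultimately have "((\<lambda>p. b (fst p) x0 + (b (fst p) (snd p) - b (fst p) x0)) \<longlongrightarrow> b t0 x0 + 0) (at p0)"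
    by (rule tendsto_add)
  then show "isCont (\<lambda>p. b (fst p) (snd p)) p0"
    by (simp add: isCont_def p0)
qed

lemma condition_T2_imp_dissipative:
  fixes b :: "real \<Rightarrow> 'd::euclidean_space \<Rightarrow> 'd"
  assumes "condition_T2 b lam"
  shows "(x - y) \<bullet> (b v x - b v y) \<le> - lam * (norm (x - y))\<^sup>2"
proof -
  obtain D where D: "\<And>t z. (b t has_derivative D t z) (at z)"
    and neg: "\<And>t z w. 2 * (w \<bullet> D t z w) \<le> - 2 * lam * (w \<bullet> w)"
    using assms unfolding condition_T2_def by metis
  define \<phi> where "\<phi> \<theta> = (x - y) \<bullet> b v (y + \<theta> *\<^sub>R (x - y))" for \<theta> :: real
  have der: "(\<phi> has_derivative (\<lambda>k. (x - y) \<bullet> D v (y + \<theta> *\<^sub>R (x - y)) (k *\<^sub>R (x - y))))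
      (at \<theta> within {0..1})" for \<theta>
  proof -
    have "((\<lambda>\<theta>. y + \<theta> *\<^sub>R (x - y)) has_derivative (\<lambda>k. k *\<^sub>R (x - y))) (at \<theta> within {0..1})"
      by (auto intro!: derivative_eq_intros)
    from has_derivative_compose[OF this D] show ?thesis
      unfolding \<phi>_def by (rule has_derivative_inner_right)
  qed
  obtain \<theta> where "\<phi> 1 - \<phi> 0 = (x - y) \<bullet> D v (y + \<theta> *\<^sub>R (x - y)) ((1 - 0) *\<^sub>R (x - y))"
    using mvt_very_simple[of 0 1 \<phi>, OF _ der] by auto
  then have "(x - y) \<bullet> (b v x - b v y) = (x - y) \<bullet> D v (y + \<theta> *\<^sub>R (x - y)) (x - y)"
    by (simp add: \<phi>_def inner_diff_right)
  also have "\<dots> \<le> - lam * (norm (x - y))\<^sup>2"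
    using neg[of "x - y" v "y + \<theta> *\<^sub>R (x - y)"] by (simp add: power2_norm_eq_inner)
  finally show ?thesis .
qed

lemma floor_grid_bounds:
  fixes m s :: real
  assumes "0 < N"
  shows "m - 1 / N \<le> s + \<lfloor>N * (m - s)\<rfloor> / N" and "s + \<lfloor>N * (m - s)\<rfloor> / N \<le> m"
proof -
  define y where "y = N * (m - s)"
  have "(y - 1) / N \<le> \<lfloor>y\<rfloor> / N" "\<lfloor>y\<rfloor> / N \<le> y / N"
    using \<open>0 < N\<close> by (intro divide_right_mono; linarith)+
  moreover have "y / N = m - s"
    using \<open>0 < N\<close> by (simp add: y_def)
  moreover have "(y - 1) / N = y / N - 1 / N"
    by (rule diff_divide_distrib)
  ultimately show "m - 1 / N \<le> s + \<lfloor>N * (m - s)\<rfloor> / N" "s + \<lfloor>N * (m - s)\<rfloor> / N \<le> m"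
    unfolding y_def by linarith+
qed

lemma floor_grid_tendsto:
  fixes m s :: real
  assumes "s \<le> m"
  shows "(\<lambda>k. s + \<lfloor>real (Suc k) * (m - s)\<rfloor> / real (Suc k)) \<longlonglongrightarrow> m"
    and "s + \<lfloor>real (Suc k) * (m - s)\<rfloor> / real (Suc k) \<in> {s..m}"
proof -
  have N: "0 < real (Suc k)" for k by simp
  note bounds = floor_grid_bounds[OF N, where m = m and s = s]
  have "(\<lambda>k. m - 1 / real (Suc k)) \<longlonglongrightarrow> m"
    using tendsto_diff[OF tendsto_const LIMSEQ_Suc[OF lim_const_over_n[of 1]], of m] by simp
  then show "(\<lambda>k. s + \<lfloor>real (Suc k) * (m - s)\<rfloor> / real (Suc k)) \<longlonglongrightarrow> m"
    by (rule tendsto_sandwich[OF _ _ _ tendsto_const, rotated 2]) (use bounds in auto)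
  show "s + \<lfloor>real (Suc k) * (m - s)\<rfloor> / real (Suc k) \<in> {s..m}"
    using bounds(2)[of k] \<open>s \<le> m\<close> by auto
qed

lemma borel_measurable_continuous_paths:
  fixes F :: "real \<Rightarrow> 'a \<Rightarrow> 'b::euclidean_space"
  assumes F: "\<And>v. F v \<in> borel_measurable M"
    and cont: "\<And>\<omega> u. \<omega> \<in> space M \<Longrightarrow> continuous_on {s..u} (\<lambda>v. F v \<omega>)"
  shows "(\<lambda>(u, \<omega>). F u \<omega>) \<in> borel_measurable (restrict_space lborel {s..} \<Otimes>\<^sub>M M)"
proof -
  \<comment> \<open>approximate \<open>max u s\<close> from the left by the grid points \<open>s + j / (k + 1)\<close>\<close>
  define q where "q k u = s + \<lfloor>real (Suc k) * (max u s - s)\<rfloor> / real (Suc k)" for k u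
  have "(\<lambda>p. F (max (fst p) s) (snd p)) \<in> borel_measurable (lborel \<Otimes>\<^sub>M M)"
  proof (rule borel_measurable_LIMSEQ_metric)
    fix k
    have "(\<lambda>p. F (s + real_of_int j / real (Suc k)) (snd p)) \<in> borel_measurable (lborel \<Otimes>\<^sub>M M)" for j
      using F by measurable
    moreover have "(\<lambda>p. \<lfloor>real (Suc k) * (max (fst p) s - s)\<rfloor>) \<in> measurable (lborel \<Otimes>\<^sub>M M) (count_space UNIV)"
      by measurable
    ultimately show "(\<lambda>p. F (q k (fst p)) (snd p)) \<in> borel_measurable (lborel \<Otimes>\<^sub>M M)"
      unfolding q_def
      by (rule measurable_compose_countable[where f = "\<lambda>j p. F (s + real_of_int j / real (Suc k)) (snd p)"])
  next
    fix p :: "real \<times> 'a" assume "p \<in> space (lborel \<Otimes>\<^sub>M M)"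
    then obtain u \<omega> where p: "p = (u, \<omega>)" and \<omega>: "\<omega> \<in> space M"
      by (cases p) (auto simp: space_pair_measure)
    have "s \<le> max u s" by simp
    note grid = floor_grid_tendsto[OF this]
    have "(\<lambda>k. F (q k u) \<omega>) \<longlonglongrightarrow> F (max u s) \<omega>"
      using grid(1) unfolding q_def
    proof (rule continuous_on_tendsto_compose[OF cont[OF \<omega>, of "max u s"]])
      show "\<forall>\<^sub>F k in sequentially. s + \<lfloor>real (Suc k) * (max u s - s)\<rfloor> / real (Suc k) \<in> {s..max u s}"
        using grid(2) by simp
    qed simp
    then show "(\<lambda>k. F (q k (fst p)) (snd p)) \<longlonglongrightarrow> F (max (fst p) s) (snd p)"
      by (simp add: p)
  qed
  moreover have "(\<lambda>p. p) \<in> measurable (restrict_space lborel {s..} \<Otimes>\<^sub>M M) (lborel \<Otimes>\<^sub>M M)"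
  proof -
    have "(\<lambda>u. u) \<in> measurable (restrict_space lborel {s..}) lborel"
      by (rule measurable_restrict_space1) simp
    from measurable_compose[OF measurable_fst this]
    have "fst \<in> measurable (restrict_space lborel {s..} \<Otimes>\<^sub>M M) lborel" by simp
    from measurable_Pair[OF this measurable_snd] show ?thesis by simp
  qed
  ultimately have "(\<lambda>p. F (max (fst p) s) (snd p)) \<in> borel_measurable (restrict_space lborel {s..} \<Otimes>\<^sub>M M)"
    by (rule measurable_compose[rotated])
  then show ?thesis
    by (rule measurable_cong[THEN iffD1, rotated])
      (auto simp: space_pair_measure space_restrict_space)
qed

lemma jointly_measurable_version:
  fixes X :: "real \<Rightarrow> 'a \<Rightarrow> 'b::euclidean_space"
  assumes X: "\<And>u. X u \<in> borel_measurable M"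
    and cont: "AE \<omega> in M. \<forall>u. continuous_on {s..u} (\<lambda>v. X v \<omega>)"
  obtains X' where "(\<lambda>(u, \<omega>). X' u \<omega>) \<in> borel_measurable (restrict_space lborel {s..} \<Otimes>\<^sub>M M)"
    and "AE \<omega> in M. \<forall>u. X' u \<omega> = X u \<omega>"
proof -
  obtain N where N: "{\<omega> \<in> space M. \<not> (\<forall>u. continuous_on {s..u} (\<lambda>v. X v \<omega>))} \<subseteq> N"
    "N \<in> null_sets M"
    using cont by (auto elim!: AE_E)
  have [measurable]: "N \<in> sets M" using N(2) by (rule null_setsD2)
  define X' where "X' v \<omega> = (if \<omega> \<in> N then 0 else X v \<omega>)" for v \<omega>
  have "(\<lambda>(u, \<omega>). X' u \<omega>) \<in> borel_measurable (restrict_space lborel {s..} \<Otimes>\<^sub>M M)"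
  proof (rule borel_measurable_continuous_paths)
    show "X' v \<in> borel_measurable M" for v
      unfolding X'_def using X by measurable
    show "continuous_on {s..u} (\<lambda>v. X' v \<omega>)" if "\<omega> \<in> space M" for \<omega> u
      using N(1) that by (cases "\<omega> \<in> N") (auto simp: X'_def)
  qed
  moreover have "AE \<omega> in M. \<forall>u. X' u \<omega> = X u \<omega>"
    using AE_not_in[OF N(2)] by eventually_elim (simp add: X'_def)
  ultimately show ?thesis by (rule that)
qed

lemma AE_solution_diff_le_nn_integral:
  fixes b :: "real \<Rightarrow> 'd::euclidean_space \<Rightarrow> 'd" and X Xb Y w :: "real \<Rightarrow> 'a \<Rightarrow> 'd"
  assumes "s \<le> t"
    and dissip: "\<And>v x y. (x - y) \<bullet> (b v x - b v y) \<le> - lam * (norm (x - y))\<^sup>2"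
    and lip: "\<And>v x y. norm (b v x - b v y) \<le> L * norm (x - y)"
    and b: "continuous_on UNIV (\<lambda>p. b (fst p) (snd p))"
    and Y: "(\<lambda>(u, \<omega>). Y u \<omega>) \<in> borel_measurable (restrict_space lborel {s..} \<Otimes>\<^sub>M M)"
    and w: "AE \<omega> in M. continuous_on {s..} (\<lambda>u. w u \<omega>)"
    and X_sol: "AE \<omega> in M. \<forall>u\<ge>s. (\<lambda>v. b v (X v \<omega>)) integrable_on {s..u} \<and>
      X u \<omega> = x + integral {s..u} (\<lambda>v. b v (X v \<omega>)) + (w u \<omega> - w s \<omega>)"
    and Xb_sol: "AE \<omega> in M. \<forall>u\<ge>s. (\<lambda>v. Y v \<omega>) integrable_on {s..u} \<and>
      Xb u \<omega> = x + integral {s..u} (\<lambda>v. Y v \<omega>) + (w u \<omega> - w s \<omega>)"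
  shows "AE \<omega> in M. ennreal (norm (X t \<omega> - Xb t \<omega>))
    \<le> (\<integral>\<^sup>+u\<in>{s..t}. ennreal (exp (- lam * (t - u)) * norm (b u (Xb u \<omega>) - Y u \<omega>)) \<partial>lborel)"
  using w X_sol Xb_sol AE_space
proof eventually_elim
  case (elim \<omega>)
  have "(\<lambda>u. Y u \<omega>) \<in> borel_measurable (restrict_space lborel {s..})"
    using measurable_Pair1[OF Y elim(4)] by simp
  then have "(\<lambda>u. Y u \<omega>) \<in> borel_measurable (restrict_space lborel {s..t})"
    by (rule measurable_restrict_mono) auto
  then show ?case
    using elim \<open>s \<le> t\<close>
    by (intro solution_diff_norm_le_nn_integral[OF \<open>s \<le> t\<close> dissip lip b, where w = "\<lambda>u. w u \<omega>"])
      (auto intro: continuous_on_subset)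
qed

lemma Lp_norm_solution_diff_le:
  fixes b :: "real \<Rightarrow> 'd::euclidean_space \<Rightarrow> 'd" and X Xb Y w :: "real \<Rightarrow> 'a \<Rightarrow> 'd"
  assumes M: "finite_measure M" and "s \<le> t" and "1 \<le> n"
    and dissip: "\<And>v x y. (x - y) \<bullet> (b v x - b v y) \<le> - lam * (norm (x - y))\<^sup>2"
    and lip: "\<And>v x y. norm (b v x - b v y) \<le> L * norm (x - y)"
    and b: "continuous_on UNIV (\<lambda>p. b (fst p) (snd p))"
    and X: "X t \<in> borel_measurable M" and Xb: "\<And>u. Xb u \<in> borel_measurable M"
    and Y: "(\<lambda>(u, \<omega>). Y u \<omega>) \<in> borel_measurable (restrict_space lborel {s..} \<Otimes>\<^sub>M M)"
    and w: "AE \<omega> in M. continuous_on {s..} (\<lambda>u. w u \<omega>)"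
    and X_sol: "AE \<omega> in M. \<forall>u\<ge>s. (\<lambda>v. b v (X v \<omega>)) integrable_on {s..u} \<and>
      X u \<omega> = x + integral {s..u} (\<lambda>v. b v (X v \<omega>)) + (w u \<omega> - w s \<omega>)"
    and Xb_sol: "AE \<omega> in M. \<forall>u\<ge>s. (\<lambda>v. Y v \<omega>) integrable_on {s..u} \<and>
      Xb u \<omega> = x + integral {s..u} (\<lambda>v. Y v \<omega>) + (w u \<omega> - w s \<omega>)"
  shows "Lp_norm M n (\<lambda>\<omega>. X t \<omega> - Xb t \<omega>)
    \<le> (\<integral>\<^sup>+u\<in>{s..t}. ennreal (exp (- lam * (t - u))) * Lp_norm M n (\<lambda>\<omega>. b u (Xb u \<omega>) - Y u \<omega>) \<partial>lborel)"
proof -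
  have "AE \<omega> in M. \<forall>u. continuous_on {s..u} (\<lambda>v. Xb v \<omega>)"
    using w Xb_sol
  proof eventually_elim
    case (elim \<omega>)
    show ?case using continuous_on_integral_equation_ge[OF elim] by blast
  qed
  with Xb obtain Xb' where Xb': "(\<lambda>(u, \<omega>). Xb' u \<omega>) \<in> borel_measurable (restrict_space lborel {s..} \<Otimes>\<^sub>M M)"
    and Xb'_eq: "AE \<omega> in M. \<forall>u. Xb' u \<omega> = Xb u \<omega>"
    by (rule jointly_measurable_version)
  show ?thesis
  proof (rule Minkowski_integral_Icc[OF M _ _ _ _ _ _ _ \<open>1 \<le> n\<close>])
    show "(\<lambda>\<omega>. X t \<omega> - Xb t \<omega>) \<in> borel_measurable M"
      using X Xb by measurable
    show "(\<lambda>\<omega>. b u (Xb u \<omega>) - Y u \<omega>) \<in> borel_measurable M" if "u \<in> {s..t}" for u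
    proof -
      have "continuous_on UNIV (\<lambda>x. b (fst (u, x)) (snd (u, x)))"
        by (rule continuous_on_compose2[OF b]) (auto intro!: continuous_intros)
      then have "(\<lambda>\<omega>. b u (Xb u \<omega>)) \<in> borel_measurable M"
        by (intro measurable_compose[OF Xb] borel_measurable_continuous_onI) simp
      moreover have "Y u \<in> borel_measurable M"
        using measurable_Pair2[OF Y] that by (simp add: space_restrict_space)
      ultimately show ?thesis by measurable
    qed
    have "fst \<in> borel_measurable (restrict_space lborel {s..} \<Otimes>\<^sub>M M)"
      by (intro measurable_compose[OF measurable_fst] measurable_restrict_space1) simp
    then have "(\<lambda>p. b (fst p) (Xb' (fst p) (snd p))) \<in> borel_measurable (restrict_space lborel {s..} \<Otimes>\<^sub>M M)"
      using Xb' unfolding case_prod_beta' by (rule borel_measurable_continuous_Pair[OF _ _ b])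
    then show "(\<lambda>(u, \<omega>). b u (Xb' u \<omega>) - Y u \<omega>) \<in> borel_measurable (restrict_space lborel {s..} \<Otimes>\<^sub>M M)"
      using Y unfolding case_prod_beta' by measurable
    show "AE \<omega> in M. \<forall>u\<in>{s..t}. b u (Xb' u \<omega>) - Y u \<omega> = b u (Xb u \<omega>) - Y u \<omega>"
      using Xb'_eq by eventually_elim simp
    show "(\<lambda>u. exp (- lam * (t - u))) \<in> borel_measurable borel"
      by measurable
  qed (use AE_solution_diff_le_nn_integral[OF \<open>s \<le> t\<close> dissip lip b Y w X_sol Xb_sol] in auto)
qed

theorem proposition4p3:
  fixes M :: "'a measure"
    and W :: "real \<Rightarrow> 'a \<Rightarrow> 'd::euclidean_space"
    and b :: "real \<Rightarrow> 'd \<Rightarrow> 'd"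
    and lamA :: real
    and s :: real and x :: 'd
    and X Xb Y :: "real \<Rightarrow> 'a \<Rightarrow> 'd"
    and n :: ennreal and t :: real
  assumes BM: "brownian_motion M W"
    and b_C3: "C3_bounded_derivs b"
    and b_smooth_t: "smooth_in_time b"
    and T2: "condition_T2 b lamA"
    and lambda_pos: "lamA > 0"
    and s_nonneg: "0 \<le> s"
    and X_meas: "\<And>u. X u \<in> borel_measurable M"
    and X_sol: "AE \<omega> in M. \<forall>u\<ge>s. (\<lambda>v. b v (X v \<omega>)) integrable_on {s..u} \<and>
                  X u \<omega> = x + integral {s..u} (\<lambda>v. b v (X v \<omega>)) + (W u \<omega> - W s \<omega>)"
    and Y_adapted: "\<And>u. u \<ge> s \<Longrightarrow> Y u \<in> borel_measurable (natural_filtration M W u)"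
    and Y_jointly_meas: "(\<lambda>(u, \<omega>). Y u \<omega>) \<in> borel_measurable (restrict_space lborel {s..} \<Otimes>\<^sub>M M)"
    and Xb_meas: "\<And>u. Xb u \<in> borel_measurable M"
    and Xb_sol: "AE \<omega> in M. \<forall>u\<ge>s. (\<lambda>v. Y v \<omega>) integrable_on {s..u} \<and>
                  Xb u \<omega> = x + integral {s..u} (\<lambda>v. Y v \<omega>) + (W u \<omega> - W s \<omega>)"
    and n_ge: "1 \<le> n"
    and st: "s \<le> t"
  shows "Lp_norm M n (\<lambda>\<omega>. X t \<omega> - Xb t \<omega>)
           \<le> (\<integral>\<^sup>+ u \<in> {s..t}. ennreal (exp (- lamA * (t - u)))
                  * Lp_norm M n (\<lambda>\<omega>. b u (Xb u \<omega>) - Y u \<omega>) \<partial>lborel)"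
proof -
  \<comment> \<open>the estimate holds path by path\<close>
  have M: "finite_measure M"
    using BM by (simp add: brownian_motion_def prob_space_def)
  have "AE \<omega> in M. continuous_on {0..} (\<lambda>u. W u \<omega>)"
    using BM by (simp add: brownian_motion_def)
  then have W_cont: "AE \<omega> in M. continuous_on {s..} (\<lambda>u. W u \<omega>)"
    by eventually_elim (erule continuous_on_subset, use s_nonneg in auto)
  obtain L where lip: "\<And>v x y. norm (b v x - b v y) \<le> L * norm (x - y)"
    using C3_bounded_derivs_imp_lipschitz[OF b_C3] by blast
  have b_cont: "continuous_on UNIV (\<lambda>p. b (fst p) (snd p))"
    using smooth_in_time_imp_isCont[OF b_smooth_t] lip by (rule continuous_on_if_uniformly_lipschitz)
  show ?thesis
    using condition_T2_imp_dissipative[OF T2] lip b_cont X_meas Xb_meas Y_jointly_meas W_cont X_sol Xb_sol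
    by (rule Lp_norm_solution_diff_le[OF M st n_ge])
qed

end
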